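(* Let $M$ be a categorical monoid, $\mathcal F$ a family of finite subgroups of $\mathrm{Ob}(M)$, and $G$ a discrete group. Let $f\colon C\to D$ be a $\mathcal G_{\mathcal F,G}$-equivalence in $(M\times G)\text{-}\mathbf{Cat}$ such that $G$ acts freely on both $C$ and $D$. Then the induced functor of orbit categories $f/G\colon C/G\to D/G$ is an $\mathcal F$-equivalence in $M\text{-}\mathbf{Cat}$.
   Context: A categorical monoid is a strict monoidal category; $M\text{-}\mathbf{Cat}$ denotes small categories with strict $M$-action. A family of finite subgroups is a collection closed under subgroups and conjugation. For a subgroup $H$ and an $M$-category $C$, $C^H$ is the subcategory of $H$-fixed objects and morphisms; a map $f$ is an $\mathcal F$-equivalence if $f^H$ is an equivalence of categories for all $H\in\mathcal F$. $\mathcal G_{\mathcal F,G}$ is the collection of graph subgroups $\Gamma_{H,\phi}=\{(h,\phi(h)):h\in H\}\subset \mathrm{Ob}(M)\times G$ with $H\in\mathcal F$ and $\phi\colon H\to G$ a homomorphism. $G$ acts freely on a category if it acts freely on its set of objects (hence on morphisms). $C/G$ denotes the quotient (colimit) in $\mathbf{Cat}$ with the induced $M$-action. *)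

theory Defs
  imports "HOL-Algebra.Group"
begin

record ('o,'a) cat =
  Ob  :: "'o set"
  Ar  :: "'a set"
  Dom :: "'a \<Rightarrow> 'o"
  Cod :: "'a \<Rightarrow> 'o"
  Idt :: "'o \<Rightarrow> 'a"
  Cmp :: "'a \<Rightarrow> 'a \<Rightarrow> 'a"   (* Cmp C g f = g \<circ> f *)

definition is_cat :: "('o,'a) cat \<Rightarrow> bool" where
  "is_cat C \<equiv>
    (\<forall>f\<in>Ar C. Dom C f \<in> Ob C \<and> Cod C f \<in> Ob C) \<and>
    (\<forall>x\<in>Ob C. Idt C x \<in> Ar C \<and> Dom C (Idt C x) = x \<and> Cod C (Idt C x) = x) \<and>
    (\<forall>f\<in>Ar C. \<forall>g\<in>Ar C. Cod C f = Dom C g \<longrightarrow>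
        Cmp C g f \<in> Ar C \<and> Dom C (Cmp C g f) = Dom C f \<and> Cod C (Cmp C g f) = Cod C g) \<and>
    (\<forall>f\<in>Ar C. Cmp C f (Idt C (Dom C f)) = f \<and> Cmp C (Idt C (Cod C f)) f = f) \<and>
    (\<forall>f\<in>Ar C. \<forall>g\<in>Ar C. \<forall>h\<in>Ar C. Cod C f = Dom C g \<and> Cod C g = Dom C h \<longrightarrow>
        Cmp C h (Cmp C g f) = Cmp C (Cmp C h g) f)"

record ('o1,'a1,'o2,'a2) ftr =
  FO :: "'o1 \<Rightarrow> 'o2"
  FA :: "'a1 \<Rightarrow> 'a2"

definition is_functor :: "('o1,'a1) cat \<Rightarrow> ('o2,'a2) cat \<Rightarrow> ('o1,'a1,'o2,'a2) ftr \<Rightarrow> bool" where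
  "is_functor C D F \<equiv> is_cat C \<and> is_cat D \<and>
    (\<forall>x\<in>Ob C. FO F x \<in> Ob D) \<and>
    (\<forall>f\<in>Ar C. FA F f \<in> Ar D \<and> Dom D (FA F f) = FO F (Dom C f) \<and> Cod D (FA F f) = FO F (Cod C f)) \<and>
    (\<forall>x\<in>Ob C. FA F (Idt C x) = Idt D (FO F x)) \<and>
    (\<forall>f\<in>Ar C. \<forall>g\<in>Ar C. Cod C f = Dom C g \<longrightarrow> FA F (Cmp C g f) = Cmp D (FA F g) (FA F f))"

definition fid :: "('o,'a,'o,'a) ftr" where
  "fid = \<lparr>FO = id, FA = id\<rparr>"

(* fcomp F K = K after F *)
definition fcomp :: "('o1,'a1,'o2,'a2) ftr \<Rightarrow> ('o2,'a2,'o3,'a3) ftr \<Rightarrow> ('o1,'a1,'o3,'a3) ftr" where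
  "fcomp F K = \<lparr>FO = FO K \<circ> FO F, FA = FA K \<circ> FA F\<rparr>"

definition cat_iso :: "('o,'a) cat \<Rightarrow> 'a \<Rightarrow> bool" where
  "cat_iso C a \<equiv> a \<in> Ar C \<and> (\<exists>b\<in>Ar C. Dom C b = Cod C a \<and> Cod C b = Dom C a \<and>
      Cmp C b a = Idt C (Dom C a) \<and> Cmp C a b = Idt C (Cod C a))"

definition nat_iso :: "('o1,'a1) cat \<Rightarrow> ('o2,'a2) cat \<Rightarrow> ('o1,'a1,'o2,'a2) ftr \<Rightarrow>
    ('o1,'a1,'o2,'a2) ftr \<Rightarrow> ('o1 \<Rightarrow> 'a2) \<Rightarrow> bool" where
  "nat_iso C D F K \<eta> \<equiv>
    (\<forall>x\<in>Ob C. \<eta> x \<in> Ar D \<and> Dom D (\<eta> x) = FO F x \<and> Cod D (\<eta> x) = FO K x \<and> cat_iso D (\<eta> x)) \<and>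
    (\<forall>f\<in>Ar C. Cmp D (\<eta> (Cod C f)) (FA F f) = Cmp D (FA K f) (\<eta> (Dom C f)))"

definition cat_equivalence :: "('o1,'a1) cat \<Rightarrow> ('o2,'a2) cat \<Rightarrow> ('o1,'a1,'o2,'a2) ftr \<Rightarrow> bool" where
  "cat_equivalence C D F \<equiv> is_functor C D F \<and>
    (\<exists>K \<eta> \<epsilon>. is_functor D C K \<and> nat_iso C C fid (fcomp F K) \<eta> \<and> nat_iso D D fid (fcomp K F) \<epsilon>)"

definition prod_cat :: "('o1,'a1) cat \<Rightarrow> ('o2,'a2) cat \<Rightarrow> ('o1 \<times> 'o2, 'a1 \<times> 'a2) cat" where
  "prod_cat C D = \<lparr>Ob = Ob C \<times> Ob D, Ar = Ar C \<times> Ar D,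
     Dom = (\<lambda>(f,g). (Dom C f, Dom D g)), Cod = (\<lambda>(f,g). (Cod C f, Cod D g)),
     Idt = (\<lambda>(x,y). (Idt C x, Idt D y)),
     Cmp = (\<lambda>(f,g) (f',g'). (Cmp C f f', Cmp D g g'))\<rparr>"

definition strict_monoidal :: "('o,'a) cat \<Rightarrow> ('o \<times> 'o, 'a \<times> 'a, 'o, 'a) ftr \<Rightarrow> 'o \<Rightarrow> bool" where
  "strict_monoidal M T u \<equiv> is_functor (prod_cat M M) M T \<and> u \<in> Ob M \<and>
    (\<forall>x\<in>Ob M. \<forall>y\<in>Ob M. \<forall>z\<in>Ob M. FO T (FO T (x,y), z) = FO T (x, FO T (y,z))) \<and>
    (\<forall>a\<in>Ar M. \<forall>b\<in>Ar M. \<forall>c\<in>Ar M. FA T (FA T (a,b), c) = FA T (a, FA T (b,c))) \<and>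
    (\<forall>x\<in>Ob M. FO T (u,x) = x \<and> FO T (x,u) = x) \<and>
    (\<forall>a\<in>Ar M. FA T (Idt M u, a) = a \<and> FA T (a, Idt M u) = a)"

definition disc_cat :: "('g,'z) monoid_scheme \<Rightarrow> ('g,'g) cat" where
  "disc_cat G = \<lparr>Ob = carrier G, Ar = carrier G, Dom = id, Cod = id, Idt = id, Cmp = (\<lambda>g f. g)\<rparr>"

definition disc_tensor :: "('g,'z) monoid_scheme \<Rightarrow> ('g \<times> 'g, 'g \<times> 'g, 'g, 'g) ftr" where
  "disc_tensor G = \<lparr>FO = (\<lambda>(g,h). g \<otimes>\<^bsub>G\<^esub> h), FA = (\<lambda>(g,h). g \<otimes>\<^bsub>G\<^esub> h)\<rparr>"

definition prod_tensor :: "('o1 \<times> 'o1, 'a1 \<times> 'a1, 'o1, 'a1) ftr \<Rightarrow> ('o2 \<times> 'o2, 'a2 \<times> 'a2, 'o2, 'a2) ftr \<Rightarrow>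
    (('o1 \<times> 'o2) \<times> ('o1 \<times> 'o2), ('a1 \<times> 'a2) \<times> ('a1 \<times> 'a2), 'o1 \<times> 'o2, 'a1 \<times> 'a2) ftr" where
  "prod_tensor T1 T2 = \<lparr>FO = (\<lambda>((a,b),(c,d)). (FO T1 (a,c), FO T2 (b,d))),
                        FA = (\<lambda>((a,b),(c,d)). (FA T1 (a,c), FA T2 (b,d)))\<rparr>"

definition strict_action :: "('o,'a) cat \<Rightarrow> ('o \<times> 'o, 'a \<times> 'a, 'o, 'a) ftr \<Rightarrow> 'o \<Rightarrow>
    ('c,'ca) cat \<Rightarrow> ('o \<times> 'c, 'a \<times> 'ca, 'c, 'ca) ftr \<Rightarrow> bool" where
  "strict_action M T u C A \<equiv> is_functor (prod_cat M C) C A \<and>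
    (\<forall>m\<in>Ob M. \<forall>n\<in>Ob M. \<forall>x\<in>Ob C. FO A (FO T (m,n), x) = FO A (m, FO A (n,x))) \<and>
    (\<forall>a\<in>Ar M. \<forall>b\<in>Ar M. \<forall>f\<in>Ar C. FA A (FA T (a,b), f) = FA A (a, FA A (b,f))) \<and>
    (\<forall>x\<in>Ob C. FO A (u,x) = x) \<and>
    (\<forall>f\<in>Ar C. FA A (Idt M u, f) = f)"

definition equivariant :: "('o,'a) cat \<Rightarrow> ('c,'ca) cat \<Rightarrow> ('d,'da) cat \<Rightarrow>
    ('o \<times> 'c, 'a \<times> 'ca, 'c, 'ca) ftr \<Rightarrow> ('o \<times> 'd, 'a \<times> 'da, 'd, 'da) ftr \<Rightarrow> ('c,'ca,'d,'da) ftr \<Rightarrow> bool" where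
  "equivariant M C D A B F \<equiv>
    (\<forall>m\<in>Ob M. \<forall>x\<in>Ob C. FO F (FO A (m,x)) = FO B (m, FO F x)) \<and>
    (\<forall>a\<in>Ar M. \<forall>f\<in>Ar C. FA F (FA A (a,f)) = FA B (a, FA F f))"

definition fix_cat :: "('o,'a) cat \<Rightarrow> ('c,'ca) cat \<Rightarrow> ('o \<times> 'c, 'a \<times> 'ca, 'c, 'ca) ftr \<Rightarrow> 'o set \<Rightarrow> ('c,'ca) cat" where
  "fix_cat M C A H = C\<lparr>Ob := {x\<in>Ob C. \<forall>h\<in>H. FO A (h,x) = x},
                       Ar := {f\<in>Ar C. \<forall>h\<in>H. FA A (Idt M h, f) = f}\<rparr>"

definition fam_equiv :: "('o,'a) cat \<Rightarrow> ('c,'ca) cat \<Rightarrow> ('d,'da) cat \<Rightarrow>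
    ('o \<times> 'c, 'a \<times> 'ca, 'c, 'ca) ftr \<Rightarrow> ('o \<times> 'd, 'a \<times> 'da, 'd, 'da) ftr \<Rightarrow> 'o set set \<Rightarrow>
    ('c,'ca,'d,'da) ftr \<Rightarrow> bool" where
  "fam_equiv M C D A B Fam F \<equiv> (\<forall>H\<in>Fam. cat_equivalence (fix_cat M C A H) (fix_cat M D B H) F)"

definition mon_subgroup :: "('o,'a) cat \<Rightarrow> ('o \<times> 'o, 'a \<times> 'a, 'o, 'a) ftr \<Rightarrow> 'o \<Rightarrow> 'o set \<Rightarrow> bool" where
  "mon_subgroup M T u H \<equiv> H \<subseteq> Ob M \<and> u \<in> H \<and>
    (\<forall>h\<in>H. \<forall>k\<in>H. FO T (h,k) \<in> H) \<and>
    (\<forall>h\<in>H. \<exists>k\<in>H. FO T (h,k) = u \<and> FO T (k,h) = u)"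

definition fin_family :: "('o,'a) cat \<Rightarrow> ('o \<times> 'o, 'a \<times> 'a, 'o, 'a) ftr \<Rightarrow> 'o \<Rightarrow> 'o set set \<Rightarrow> bool" where
  "fin_family M T u Fam \<equiv>
    (\<forall>H\<in>Fam. mon_subgroup M T u H \<and> finite H) \<and>
    (\<forall>H\<in>Fam. \<forall>K. mon_subgroup M T u K \<and> K \<subseteq> H \<longrightarrow> K \<in> Fam) \<and>
    (\<forall>H\<in>Fam. \<forall>v\<in>Ob M. \<forall>w\<in>Ob M. FO T (v,w) = u \<and> FO T (w,v) = u \<longrightarrow>
        {FO T (FO T (v,h), w) | h. h \<in> H} \<in> Fam)"

definition graph_subgroups :: "('o \<times> 'o, 'a \<times> 'a, 'o, 'a) ftr \<Rightarrow> 'o set set \<Rightarrow> ('g,'z) monoid_scheme \<Rightarrow> ('o \<times> 'g) set set" where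
  "graph_subgroups T Fam G = {{(h, \<phi> h) | h. h \<in> H} | H \<phi>. H \<in> Fam \<and> \<phi> \<in> H \<rightarrow> carrier G \<and>
      (\<forall>h\<in>H. \<forall>k\<in>H. \<phi> (FO T (h,k)) = \<phi> h \<otimes>\<^bsub>G\<^esub> \<phi> k)}"

definition free_G_action :: "'o \<Rightarrow> ('g,'z) monoid_scheme \<Rightarrow> ('c,'ca) cat \<Rightarrow>
    (('o \<times> 'g) \<times> 'c, ('a \<times> 'g) \<times> 'ca, 'c, 'ca) ftr \<Rightarrow> bool" where
  "free_G_action u G C A \<equiv> (\<forall>x\<in>Ob C. \<forall>g\<in>carrier G. FO A ((u,g),x) = x \<longrightarrow> g = \<one>\<^bsub>G\<^esub>)"

definition orb_o :: "'o \<Rightarrow> ('g,'z) monoid_scheme \<Rightarrow> (('o \<times> 'g) \<times> 'c, ('a \<times> 'g) \<times> 'ca, 'c, 'ca) ftr \<Rightarrow> 'c \<Rightarrow> 'c set" where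
  "orb_o u G A x = {FO A ((u,g),x) | g. g \<in> carrier G}"

definition orb_a :: "('o,'a) cat \<Rightarrow> 'o \<Rightarrow> ('g,'z) monoid_scheme \<Rightarrow> (('o \<times> 'g) \<times> 'c, ('a \<times> 'g) \<times> 'ca, 'c, 'ca) ftr \<Rightarrow> 'ca \<Rightarrow> 'ca set" where
  "orb_a M u G A f = {FA A ((Idt M u, g), f) | g. g \<in> carrier G}"

text \<open>The quotient category C/G (explicit description of the colimit in Cat, valid for
  actions that are free on objects): objects are orbits of objects, arrows are orbits
  of arrows, and composition of orbits is computed on composable representatives.\<close>
definition quot_cat :: "('o,'a) cat \<Rightarrow> 'o \<Rightarrow> ('g,'z) monoid_scheme \<Rightarrow> ('c,'ca) cat \<Rightarrow>
    (('o \<times> 'g) \<times> 'c, ('a \<times> 'g) \<times> 'ca, 'c, 'ca) ftr \<Rightarrow> ('c set, 'ca set) cat" where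
  "quot_cat M u G C A = \<lparr>Ob = orb_o u G A ` Ob C, Ar = orb_a M u G A ` Ar C,
     Dom = (\<lambda>S. Dom C ` S), Cod = (\<lambda>S. Cod C ` S), Idt = (\<lambda>X. Idt C ` X),
     Cmp = (\<lambda>T S. {Cmp C t s | t s. t \<in> T \<and> s \<in> S \<and> Cod C s = Dom C t})\<rparr>"

definition quot_action :: "('g,'z) monoid_scheme \<Rightarrow> (('o \<times> 'g) \<times> 'c, ('a \<times> 'g) \<times> 'ca, 'c, 'ca) ftr \<Rightarrow>
    ('o \<times> 'c set, 'a \<times> 'ca set, 'c set, 'ca set) ftr" where
  "quot_action G A = \<lparr>FO = (\<lambda>(m,X). (\<lambda>x. FO A ((m, \<one>\<^bsub>G\<^esub>), x)) ` X),
                      FA = (\<lambda>(a,S). (\<lambda>s. FA A ((a, \<one>\<^bsub>G\<^esub>), s)) ` S)\<rparr>"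

definition quot_ftr :: "('c,'ca,'d,'da) ftr \<Rightarrow> ('c set,'ca set,'d set,'da set) ftr" where
  "quot_ftr F = \<lparr>FO = (\<lambda>X. FO F ` X), FA = (\<lambda>S. FA F ` S)\<rparr>"

end

theory Submission
  imports Defs
begin

text \<open>
  An object of \<open>C/G\<close> fixed by a finite subgroup \<open>H\<close> of \<open>Ob(M)\<close> is the orbit of an object
  \<open>x\<close> with \<open>h \<cdot> x = \<gamma>(h) \<cdot> x\<close> for all \<open>h \<in> H\<close>. Freeness makes \<open>\<gamma>(h) \<in> G\<close> unique,
  and since the actions of \<open>M\<close> and \<open>G\<close> commute, \<open>\<phi> = inv \<circ> \<gamma>\<close> is a homomorphism, so \<open>x\<close>
  is fixed by the graph subgroup \<open>\<Gamma>(H,\<phi>)\<close>; conversely, orbits of \<open>\<Gamma>(H,\<phi>)\<close>-fixed objects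
  and arrows are \<open>H\<close>-fixed. An equivalence is the same as a fully faithful, essentially
  surjective functor, and each of these three properties of \<open>f/G\<close> on \<open>H\<close>-fixed points can be
  checked on representatives, where it is inherited from \<open>f\<close> on \<open>\<Gamma>(H,\<phi>)\<close>-fixed points;
  freeness again pins down the representative of an arrow once that of its domain is chosen.
\<close>

section \<open>Categories, functors and isomorphisms\<close>

locale category =
  fixes C :: "('o,'a) cat"
  assumes is_cat: "is_cat C"
begin

lemma Dom_in_Ob [simp]: "f \<in> Ar C \<Longrightarrow> Dom C f \<in> Ob C"
  and Cod_in_Ob [simp]: "f \<in> Ar C \<Longrightarrow> Cod C f \<in> Ob C"
  and Idt_in_Ar [simp]: "x \<in> Ob C \<Longrightarrow> Idt C x \<in> Ar C"
  and Dom_Idt [simp]: "x \<in> Ob C \<Longrightarrow> Dom C (Idt C x) = x"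
  and Cod_Idt [simp]: "x \<in> Ob C \<Longrightarrow> Cod C (Idt C x) = x"
  using is_cat unfolding is_cat_def by blast+

lemma Cmp_in_Ar [simp]: "f \<in> Ar C \<Longrightarrow> g \<in> Ar C \<Longrightarrow> Cod C f = Dom C g \<Longrightarrow> Cmp C g f \<in> Ar C"
  and Dom_Cmp [simp]: "f \<in> Ar C \<Longrightarrow> g \<in> Ar C \<Longrightarrow> Cod C f = Dom C g \<Longrightarrow> Dom C (Cmp C g f) = Dom C f"
  and Cod_Cmp [simp]: "f \<in> Ar C \<Longrightarrow> g \<in> Ar C \<Longrightarrow> Cod C f = Dom C g \<Longrightarrow> Cod C (Cmp C g f) = Cod C g"
  using is_cat unfolding is_cat_def by blast+

lemma Cmp_Idt_right [simp]: "f \<in> Ar C \<Longrightarrow> Dom C f = x \<Longrightarrow> Cmp C f (Idt C x) = f"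
  and Cmp_Idt_left [simp]: "f \<in> Ar C \<Longrightarrow> Cod C f = x \<Longrightarrow> Cmp C (Idt C x) f = f"
  using is_cat unfolding is_cat_def by blast+

lemma Cmp_assoc:
  "f \<in> Ar C \<Longrightarrow> g \<in> Ar C \<Longrightarrow> h \<in> Ar C \<Longrightarrow> Cod C f = Dom C g \<Longrightarrow> Cod C g = Dom C h \<Longrightarrow>
   Cmp C h (Cmp C g f) = Cmp C (Cmp C h g) f"
  using is_cat unfolding is_cat_def by blast

end

locale cat_functor =
  fixes C :: "('o1,'a1) cat" and D :: "('o2,'a2) cat" and F :: "('o1,'a1,'o2,'a2) ftr"
  assumes is_functor: "is_functor C D F"
begin

sublocale C: category C
  using is_functor unfolding is_functor_def category_def by blast

sublocale D: category D
  using is_functor unfolding is_functor_def category_def by blast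

lemma FO_in_Ob [simp]: "x \<in> Ob C \<Longrightarrow> FO F x \<in> Ob D"
  and FA_in_Ar [simp]: "f \<in> Ar C \<Longrightarrow> FA F f \<in> Ar D"
  and Dom_FA [simp]: "f \<in> Ar C \<Longrightarrow> Dom D (FA F f) = FO F (Dom C f)"
  and Cod_FA [simp]: "f \<in> Ar C \<Longrightarrow> Cod D (FA F f) = FO F (Cod C f)"
  and FA_Idt [simp]: "x \<in> Ob C \<Longrightarrow> FA F (Idt C x) = Idt D (FO F x)"
  and FA_Cmp [simp]: "f \<in> Ar C \<Longrightarrow> g \<in> Ar C \<Longrightarrow> Cod C f = Dom C g \<Longrightarrow>
        FA F (Cmp C g f) = Cmp D (FA F g) (FA F f)"
  using is_functor unfolding is_functor_def by blast+

end

lemma fid_simps [simp]: "FO fid x = x" "FA fid f = f"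
  and fcomp_simps [simp]: "FO (fcomp F K) x = FO K (FO F x)" "FA (fcomp F K) f = FA K (FA F f)"
  by (simp_all add: fid_def fcomp_def)

lemma nat_iso_component:
  "nat_iso C D F K \<eta> \<Longrightarrow> x \<in> Ob C \<Longrightarrow>
     \<eta> x \<in> Ar D \<and> Dom D (\<eta> x) = FO F x \<and> Cod D (\<eta> x) = FO K x \<and> cat_iso D (\<eta> x)"
  and nat_iso_naturality:
  "nat_iso C D F K \<eta> \<Longrightarrow> f \<in> Ar C \<Longrightarrow> Cmp D (\<eta> (Cod C f)) (FA F f) = Cmp D (FA K f) (\<eta> (Dom C f))"
  unfolding nat_iso_def by blast+

definition iso_inv :: "('o,'a) cat \<Rightarrow> 'a \<Rightarrow> 'a" where
  "iso_inv C e = (SOME b. b \<in> Ar C \<and> Dom C b = Cod C e \<and> Cod C b = Dom C e \<and>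
     Cmp C b e = Idt C (Dom C e) \<and> Cmp C e b = Idt C (Cod C e))"

lemma iso_inv:
  assumes "cat_iso C e"
  shows "iso_inv C e \<in> Ar C" "Dom C (iso_inv C e) = Cod C e" "Cod C (iso_inv C e) = Dom C e"
    and "Cmp C (iso_inv C e) e = Idt C (Dom C e)" "Cmp C e (iso_inv C e) = Idt C (Cod C e)"
  using someI_ex[OF assms[unfolded cat_iso_def, THEN conjunct2, unfolded Bex_def]]
  unfolding iso_inv_def by blast+

lemma cat_iso_iso_inv: "cat_iso C e \<Longrightarrow> cat_iso C (iso_inv C e)"
  using iso_inv[of C e] unfolding cat_iso_def by auto

context category
begin

lemma Cmp_assoc_cancel:
  "f \<in> Ar C \<Longrightarrow> g \<in> Ar C \<Longrightarrow> h \<in> Ar C \<Longrightarrow> Cod C f = Dom C g \<Longrightarrow> Cod C g = Dom C h \<Longrightarrow>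
   Cmp C g f = Idt C (Dom C f) \<Longrightarrow> Cmp C (Cmp C h g) f = h"
  by (metis Cmp_assoc Cmp_Idt_right Cod_Cmp Cod_Idt Dom_in_Ob)

lemma iso_cancel_left:
  assumes e: "cat_iso C e" and a: "a \<in> Ar C" "Cod C a = Dom C e" and a': "a' \<in> Ar C" "Cod C a' = Dom C e"
    and eq: "Cmp C e a = Cmp C e a'"
  shows "a = a'"
proof -
  note e_inv = iso_inv[OF e]
  have e_in: "e \<in> Ar C" using e unfolding cat_iso_def by blast
  have "a = Cmp C (Cmp C (iso_inv C e) e) a" using a by (simp add: e_inv)
  also have "\<dots> = Cmp C (iso_inv C e) (Cmp C e a)" using a e_in by (simp add: e_inv(1-3) Cmp_assoc)
  also have "\<dots> = Cmp C (Cmp C (iso_inv C e) e) a'" using a' e_in by (simp add: e_inv(1-3) Cmp_assoc eq)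
  also have "\<dots> = a'" using a' by (simp add: e_inv)
  finally show ?thesis .
qed

lemma iso_cancel_right:
  assumes e: "cat_iso C e" and a: "a \<in> Ar C" "Dom C a = Cod C e" and a': "a' \<in> Ar C" "Dom C a' = Cod C e"
    and eq: "Cmp C a e = Cmp C a' e"
  shows "a = a'"
proof -
  note e_inv = iso_inv[OF e]
  have e_in: "e \<in> Ar C" using e unfolding cat_iso_def by blast
  have "a = Cmp C a (Cmp C e (iso_inv C e))" using a by (simp add: e_inv)
  also have "\<dots> = Cmp C (Cmp C a e) (iso_inv C e)" using a e_in by (simp add: e_inv(1-3) Cmp_assoc)
  also have "\<dots> = Cmp C a' (Cmp C e (iso_inv C e))" using a' e_in by (simp add: e_inv(1-3) Cmp_assoc eq)
  also have "\<dots> = a'" using a' by (simp add: e_inv)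
  finally show ?thesis .
qed

end

section \<open>Equivalences of categories\<close>

definition full :: "('o1,'a1) cat \<Rightarrow> ('o2,'a2) cat \<Rightarrow> ('o1,'a1,'o2,'a2) ftr \<Rightarrow> bool" where
  "full C D F \<equiv> \<forall>x\<in>Ob C. \<forall>y\<in>Ob C. \<forall>b\<in>Ar D. Dom D b = FO F x \<and> Cod D b = FO F y \<longrightarrow>
     (\<exists>a\<in>Ar C. Dom C a = x \<and> Cod C a = y \<and> FA F a = b)"

definition faithful :: "('o1,'a1) cat \<Rightarrow> ('o2,'a2) cat \<Rightarrow> ('o1,'a1,'o2,'a2) ftr \<Rightarrow> bool" where
  "faithful C D F \<equiv> \<forall>a\<in>Ar C. \<forall>a'\<in>Ar C.
     Dom C a = Dom C a' \<and> Cod C a = Cod C a' \<and> FA F a = FA F a' \<longrightarrow> a = a'"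

definition ess_surj :: "('o1,'a1) cat \<Rightarrow> ('o2,'a2) cat \<Rightarrow> ('o1,'a1,'o2,'a2) ftr \<Rightarrow> bool" where
  "ess_surj C D F \<equiv> \<forall>y\<in>Ob D. \<exists>x\<in>Ob C. \<exists>b. cat_iso D b \<and> Dom D b = FO F x \<and> Cod D b = y"

locale equivalence_data =
  F: cat_functor C D F + K: cat_functor D C K
  for C :: "('o1,'a1) cat" and D :: "('o2,'a2) cat" and F K +
  fixes \<eta> :: "'o1 \<Rightarrow> 'a1" and \<epsilon> :: "'o2 \<Rightarrow> 'a2"
  assumes unit: "nat_iso C C fid (fcomp F K) \<eta>" and counit: "nat_iso D D fid (fcomp K F) \<epsilon>"
begin

lemma unit_component:
  "x \<in> Ob C \<Longrightarrow> \<eta> x \<in> Ar C \<and> Dom C (\<eta> x) = x \<and> Cod C (\<eta> x) = FO K (FO F x) \<and> cat_iso C (\<eta> x)"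
  using nat_iso_component[OF unit] by simp

lemma unit_naturality: "a \<in> Ar C \<Longrightarrow> Cmp C (\<eta> (Cod C a)) a = Cmp C (FA K (FA F a)) (\<eta> (Dom C a))"
  using nat_iso_naturality[OF unit] by simp

lemma swap: "equivalence_data D C K F \<epsilon> \<eta>"
  by (simp add: equivalence_data_def equivalence_data_axioms_def unit counit F.cat_functor_axioms K.cat_functor_axioms)

lemma faithful: "faithful C D F"
  unfolding faithful_def
proof (intro ballI impI)
  fix a a' assume a: "a \<in> Ar C" and a': "a' \<in> Ar C"
    and parallel: "Dom C a = Dom C a' \<and> Cod C a = Cod C a' \<and> FA F a = FA F a'"
  have "Cmp C (\<eta> (Cod C a)) a = Cmp C (\<eta> (Cod C a)) a'"
    using unit_naturality[OF a] unit_naturality[OF a'] parallel by simp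
  then show "a = a'"
    by (rule F.C.iso_cancel_left[rotated 5]) (use a a' parallel unit_component[of "Cod C a"] in auto)
qed

lemma full: "full C D F"
  unfolding full_def
proof (intro ballI impI)
  fix x y b assume x: "x \<in> Ob C" and y: "y \<in> Ob C" and b: "b \<in> Ar D"
    and b_hom: "Dom D b = FO F x \<and> Cod D b = FO F y"
  note \<eta>x = unit_component[OF x] and \<eta>y = unit_component[OF y]
  note \<eta>y_inv = iso_inv[of C "\<eta> y"]
  define a where "a = Cmp C (iso_inv C (\<eta> y)) (Cmp C (FA K b) (\<eta> x))"
  have a: "a \<in> Ar C" "Dom C a = x" "Cod C a = y"
    unfolding a_def using \<eta>x \<eta>y \<eta>y_inv b b_hom by auto
  have "Cmp C (FA K (FA F a)) (\<eta> x) = Cmp C (\<eta> y) a"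
    using unit_naturality[OF a(1)] a by simp
  also have "\<dots> = Cmp C (Cmp C (\<eta> y) (iso_inv C (\<eta> y))) (Cmp C (FA K b) (\<eta> x))"
    unfolding a_def using \<eta>x \<eta>y \<eta>y_inv b b_hom by (simp add: F.C.Cmp_assoc)
  also have "\<dots> = Cmp C (FA K b) (\<eta> x)"
    using \<eta>x \<eta>y \<eta>y_inv b b_hom by simp
  finally have "FA K (FA F a) = FA K b"
    by (rule F.C.iso_cancel_right[rotated 5]) (use \<eta>x a b b_hom in auto)
  then have "FA F a = b"
    using equivalence_data.faithful[OF swap] a b b_hom unfolding faithful_def by simp
  then show "\<exists>a\<in>Ar C. Dom C a = x \<and> Cod C a = y \<and> FA F a = b"
    using a by blast
qed

lemma ess_surj: "ess_surj C D F"
  unfolding ess_surj_def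
proof
  fix y assume y: "y \<in> Ob D"
  have \<epsilon>y: "cat_iso D (\<epsilon> y)" "Dom D (\<epsilon> y) = y" "Cod D (\<epsilon> y) = FO F (FO K y)"
    using nat_iso_component[OF counit y] by simp_all
  then show "\<exists>x\<in>Ob C. \<exists>b. cat_iso D b \<and> Dom D b = FO F x \<and> Cod D b = y"
    using y cat_iso_iso_inv iso_inv by (metis K.FO_in_Ob)
qed

end

locale fully_faithful_ess_surj =
  cat_functor C D F for C :: "('o1,'a1) cat" and D :: "('o2,'a2) cat" and F +
  assumes full: "full C D F" and faithful: "faithful C D F" and ess_surj: "ess_surj C D F"
begin

lemma faithfulD:
  "a \<in> Ar C \<Longrightarrow> a' \<in> Ar C \<Longrightarrow> Dom C a = Dom C a' \<Longrightarrow> Cod C a = Cod C a' \<Longrightarrow> FA F a = FA F a' \<Longrightarrow> a = a'"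
  using faithful unfolding faithful_def by blast

definition preim :: "'o1 \<Rightarrow> 'o1 \<Rightarrow> 'a2 \<Rightarrow> 'a1" where
  "preim x y b = (SOME a. a \<in> Ar C \<and> Dom C a = x \<and> Cod C a = y \<and> FA F a = b)"

lemma preim:
  assumes "x \<in> Ob C" "y \<in> Ob C" "b \<in> Ar D" "Dom D b = FO F x" "Cod D b = FO F y"
  shows "preim x y b \<in> Ar C \<and> Dom C (preim x y b) = x \<and> Cod C (preim x y b) = y \<and> FA F (preim x y b) = b"
proof -
  have "\<exists>a. a \<in> Ar C \<and> Dom C a = x \<and> Cod C a = y \<and> FA F a = b"
    using full assms unfolding full_def by blast
  then show ?thesis
    unfolding preim_def by (rule someI_ex)
qed

definition rep :: "'o2 \<Rightarrow> 'o1" where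
  "rep y = (SOME x. x \<in> Ob C \<and> (\<exists>b. cat_iso D b \<and> Dom D b = FO F x \<and> Cod D b = y))"

definition rep_iso :: "'o2 \<Rightarrow> 'a2" where
  "rep_iso y = (SOME b. cat_iso D b \<and> Dom D b = FO F (rep y) \<and> Cod D b = y)"

lemma rep:
  assumes "y \<in> Ob D"
  shows "rep y \<in> Ob C \<and> cat_iso D (rep_iso y) \<and> Dom D (rep_iso y) = FO F (rep y) \<and> Cod D (rep_iso y) = y"
proof -
  have "\<exists>x. x \<in> Ob C \<and> (\<exists>b. cat_iso D b \<and> Dom D b = FO F x \<and> Cod D b = y)"
    using ess_surj assms unfolding ess_surj_def by blast
  then have "rep y \<in> Ob C \<and> (\<exists>b. cat_iso D b \<and> Dom D b = FO F (rep y) \<and> Cod D b = y)"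
    unfolding rep_def by (rule someI_ex)
  then show ?thesis
    unfolding rep_iso_def using someI_ex[of "\<lambda>b. cat_iso D b \<and> Dom D b = FO F (rep y) \<and> Cod D b = y"] by blast
qed

definition counit :: "'o2 \<Rightarrow> 'a2" where
  "counit y = iso_inv D (rep_iso y)"

lemma counit:
  assumes "y \<in> Ob D"
  shows "counit y \<in> Ar D" "Dom D (counit y) = y" "Cod D (counit y) = FO F (rep y)" "cat_iso D (counit y)"
    and "Cmp D (counit y) (rep_iso y) = Idt D (FO F (rep y))" "Cmp D (rep_iso y) (counit y) = Idt D y"
    and "rep_iso y \<in> Ar D" "Dom D (rep_iso y) = FO F (rep y)" "Cod D (rep_iso y) = y"
proof -
  have r: "cat_iso D (rep_iso y)" "Dom D (rep_iso y) = FO F (rep y)" "Cod D (rep_iso y) = y"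
    using rep[OF assms] by simp_all
  then show "counit y \<in> Ar D" "Dom D (counit y) = y" "Cod D (counit y) = FO F (rep y)" "cat_iso D (counit y)"
    "Cmp D (counit y) (rep_iso y) = Idt D (FO F (rep y))" "Cmp D (rep_iso y) (counit y) = Idt D y"
    unfolding counit_def using iso_inv[OF r(1)] cat_iso_iso_inv[OF r(1)] by simp_all
  show "rep_iso y \<in> Ar D" "Dom D (rep_iso y) = FO F (rep y)" "Cod D (rep_iso y) = y"
    using r unfolding cat_iso_def by simp_all
qed

text \<open>\<open>transport b\<close> has both ends in the image of \<open>F\<close>, so fullness lifts it to \<open>C\<close>;
  these lifts define the quasi-inverse on arrows.\<close>

definition transport :: "'a2 \<Rightarrow> 'a2" where
  "transport b = Cmp D (counit (Cod D b)) (Cmp D b (rep_iso (Dom D b)))"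

lemma transport:
  "b \<in> Ar D \<Longrightarrow> transport b \<in> Ar D \<and> Dom D (transport b) = FO F (rep (Dom D b)) \<and>
     Cod D (transport b) = FO F (rep (Cod D b))"
  unfolding transport_def using counit by simp

lemma transport_Idt: "y \<in> Ob D \<Longrightarrow> transport (Idt D y) = Idt D (FO F (rep y))"
  unfolding transport_def using counit by simp

lemma transport_Cmp:
  assumes b: "b \<in> Ar D" and c: "c \<in> Ar D" and bc: "Cod D b = Dom D c"
  shows "transport (Cmp D c b) = Cmp D (transport c) (transport b)"
proof -
  have "Dom D b \<in> Ob D" "Cod D b \<in> Ob D" "Cod D c \<in> Ob D"
    using b c by auto
  then show ?thesis
    unfolding transport_def using b c bc counit by (simp add: D.Cmp_assoc D.Cmp_assoc_cancel)
qed

definition quasi_inv :: "('o2,'a2,'o1,'a1) ftr" where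
  "quasi_inv = \<lparr>FO = rep, FA = (\<lambda>b. preim (rep (Dom D b)) (rep (Cod D b)) (transport b))\<rparr>"

lemma FO_quasi_inv [simp]: "FO quasi_inv y = rep y"
  by (simp add: quasi_inv_def)

lemma FA_quasi_inv:
  "b \<in> Ar D \<Longrightarrow> FA quasi_inv b \<in> Ar C \<and> Dom C (FA quasi_inv b) = rep (Dom D b) \<and>
     Cod C (FA quasi_inv b) = rep (Cod D b) \<and> FA F (FA quasi_inv b) = transport b"
  unfolding quasi_inv_def using preim rep transport by simp

lemma quasi_inv_functor: "is_functor D C quasi_inv"
  unfolding is_functor_def
proof (intro conjI ballI impI)
  show "is_cat D" by (rule D.is_cat)
  show "is_cat C" by (rule C.is_cat)
  show "FO quasi_inv y \<in> Ob C" if "y \<in> Ob D" for y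
    using rep that by simp
  show "FA quasi_inv b \<in> Ar C" "Dom C (FA quasi_inv b) = FO quasi_inv (Dom D b)"
    "Cod C (FA quasi_inv b) = FO quasi_inv (Cod D b)" if "b \<in> Ar D" for b
    using FA_quasi_inv that by simp_all
  show "FA quasi_inv (Idt D y) = Idt C (FO quasi_inv y)" if y: "y \<in> Ob D" for y
    using FA_quasi_inv[of "Idt D y"] rep[OF y] y by (intro faithfulD) (simp_all add: transport_Idt)
  show "FA quasi_inv (Cmp D c b) = Cmp C (FA quasi_inv c) (FA quasi_inv b)"
    if "b \<in> Ar D" "c \<in> Ar D" "Cod D b = Dom D c" for b c
    using FA_quasi_inv[of b] FA_quasi_inv[of c] FA_quasi_inv[of "Cmp D c b"] that
    by (intro faithfulD) (simp_all add: transport_Cmp)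
qed

lemma counit_nat_iso: "nat_iso D D fid (fcomp quasi_inv F) counit"
  unfolding nat_iso_def
proof (intro conjI ballI)
  fix y assume "y \<in> Ob D"
  then show "counit y \<in> Ar D" "Dom D (counit y) = FO fid y" "Cod D (counit y) = FO (fcomp quasi_inv F) y"
    "cat_iso D (counit y)" using counit by simp_all
next
  fix b assume b: "b \<in> Ar D"
  have x: "Dom D b \<in> Ob D" and y: "Cod D b \<in> Ob D" using b by auto
  then show "Cmp D (counit (Cod D b)) (FA fid b) = Cmp D (FA (fcomp quasi_inv F) b) (counit (Dom D b))"
    using FA_quasi_inv[OF b] b counit[OF x] counit[OF y]
    by (simp add: transport_def D.Cmp_assoc D.Cmp_assoc_cancel)
qed

definition unit :: "'o1 \<Rightarrow> 'a1" where
  "unit x = preim x (rep (FO F x)) (counit (FO F x))"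

lemma unit:
  "x \<in> Ob C \<Longrightarrow> unit x \<in> Ar C \<and> Dom C (unit x) = x \<and> Cod C (unit x) = rep (FO F x) \<and>
     FA F (unit x) = counit (FO F x)"
  unfolding unit_def using preim rep counit by simp

lemma cat_iso_unit:
  assumes x: "x \<in> Ob C"
  shows "cat_iso C (unit x)"
proof -
  have Fx: "FO F x \<in> Ob D" using x by simp
  define v where "v = preim (rep (FO F x)) x (rep_iso (FO F x))"
  have v: "v \<in> Ar C" "Dom C v = rep (FO F x)" "Cod C v = x" "FA F v = rep_iso (FO F x)"
    unfolding v_def using preim x rep[OF Fx] counit[OF Fx] by simp_all
  have "Cmp C v (unit x) = Idt C x"
    using unit[OF x] v x counit[OF Fx] by (intro faithfulD) simp_all
  moreover have "Cmp C (unit x) v = Idt C (rep (FO F x))"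
    using unit[OF x] v rep[OF Fx] counit[OF Fx] by (intro faithfulD) simp_all
  ultimately show ?thesis
    unfolding cat_iso_def using unit[OF x] v by auto
qed

lemma unit_nat_iso: "nat_iso C C fid (fcomp F quasi_inv) unit"
  unfolding nat_iso_def
proof (intro conjI ballI)
  fix x assume "x \<in> Ob C"
  then show "unit x \<in> Ar C" "Dom C (unit x) = FO fid x" "Cod C (unit x) = FO (fcomp F quasi_inv) x"
    "cat_iso C (unit x)" using unit cat_iso_unit by simp_all
next
  fix a assume a: "a \<in> Ar C"
  have x: "FO F (Dom C a) \<in> Ob D" and y: "FO F (Cod C a) \<in> Ob D" using a by auto
  note ux = unit[of "Dom C a"] and uy = unit[of "Cod C a"] and Ka = FA_quasi_inv[of "FA F a"]
  have "FA F (Cmp C (FA quasi_inv (FA F a)) (unit (Dom C a))) = FA F (Cmp C (unit (Cod C a)) a)"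
    using a Ka ux uy counit[OF x] counit[OF y] by (simp add: transport_def D.Cmp_assoc D.Cmp_assoc_cancel)
  then show "Cmp C (unit (Cod C a)) (FA fid a) = Cmp C (FA (fcomp F quasi_inv) a) (unit (Dom C a))"
    using a Ka ux uy by (intro faithfulD) simp_all
qed

lemma cat_equivalence: "cat_equivalence C D F"
  unfolding cat_equivalence_def
  using is_functor quasi_inv_functor unit_nat_iso counit_nat_iso by blast

end

theorem cat_equivalence_iff:
  "cat_equivalence C D F \<longleftrightarrow> is_functor C D F \<and> full C D F \<and> faithful C D F \<and> ess_surj C D F"
proof
  assume "cat_equivalence C D F"
  then obtain K \<eta> \<epsilon> where "equivalence_data C D F K \<eta> \<epsilon>"
    unfolding cat_equivalence_def equivalence_data_def equivalence_data_axioms_def cat_functor_def by blast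
  then show "is_functor C D F \<and> full C D F \<and> faithful C D F \<and> ess_surj C D F"
    using equivalence_data.full equivalence_data.faithful equivalence_data.ess_surj
    by (metis cat_functor.is_functor equivalence_data_def)
next
  assume "is_functor C D F \<and> full C D F \<and> faithful C D F \<and> ess_surj C D F"
  then show "cat_equivalence C D F"
    by (intro fully_faithful_ess_surj.cat_equivalence)
      (simp add: fully_faithful_ess_surj_def fully_faithful_ess_surj_axioms_def cat_functor_def)
qed

section \<open>Products, discrete categories and fixed subcategories\<close>

lemma prod_cat_simps [simp]:
  "Ob (prod_cat C D) = Ob C \<times> Ob D" "Ar (prod_cat C D) = Ar C \<times> Ar D"
  "Dom (prod_cat C D) (a,b) = (Dom C a, Dom D b)" "Cod (prod_cat C D) (a,b) = (Cod C a, Cod D b)"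
  "Idt (prod_cat C D) (x,y) = (Idt C x, Idt D y)" "Cmp (prod_cat C D) (a,b) (a',b') = (Cmp C a a', Cmp D b b')"
  by (simp_all add: prod_cat_def)

lemma disc_cat_simps [simp]:
  "Ob (disc_cat G) = carrier G" "Ar (disc_cat G) = carrier G" "Dom (disc_cat G) g = g"
  "Cod (disc_cat G) g = g" "Idt (disc_cat G) g = g" "Cmp (disc_cat G) g h = g"
  by (simp_all add: disc_cat_def)

lemma tensor_simps [simp]:
  "FO (prod_tensor T1 T2) ((a,b),(c,d)) = (FO T1 (a,c), FO T2 (b,d))"
  "FA (prod_tensor T1 T2) ((f,g),(f',g')) = (FA T1 (f,f'), FA T2 (g,g'))"
  "FO (disc_tensor G) (x,y) = x \<otimes>\<^bsub>G\<^esub> y" "FA (disc_tensor G) (x,y) = x \<otimes>\<^bsub>G\<^esub> y"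
  by (simp_all add: prod_tensor_def disc_tensor_def)

lemma prod_cat_is_cat: "is_cat C \<Longrightarrow> is_cat D \<Longrightarrow> is_cat (prod_cat C D)"
  unfolding is_cat_def by (auto simp: prod_cat_def)

lemma subcategory_is_cat:
  assumes "is_cat C" "Obs \<subseteq> Ob C" "Ars \<subseteq> Ar C"
    and "\<And>f. f \<in> Ars \<Longrightarrow> Dom C f \<in> Obs \<and> Cod C f \<in> Obs" "\<And>x. x \<in> Obs \<Longrightarrow> Idt C x \<in> Ars"
    and "\<And>f g. f \<in> Ars \<Longrightarrow> g \<in> Ars \<Longrightarrow> Cod C f = Dom C g \<Longrightarrow> Cmp C g f \<in> Ars"
  shows "is_cat (C\<lparr>Ob := Obs, Ar := Ars\<rparr>)"
  using assms unfolding is_cat_def by (simp add: subset_iff)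

lemma subcategory_functor:
  assumes "is_functor C D F" "is_cat (C\<lparr>Ob := Obs, Ar := Ars\<rparr>)" "is_cat (D\<lparr>Ob := Obs', Ar := Ars'\<rparr>)"
    and "Obs \<subseteq> Ob C" "Ars \<subseteq> Ar C" "FO F ` Obs \<subseteq> Obs'" "FA F ` Ars \<subseteq> Ars'"
  shows "is_functor (C\<lparr>Ob := Obs, Ar := Ars\<rparr>) (D\<lparr>Ob := Obs', Ar := Ars'\<rparr>) F"
  using assms unfolding is_functor_def by (simp add: subset_iff image_subset_iff)

lemma fix_cat_simps [simp]:
  "Ob (fix_cat M C A H) = {x\<in>Ob C. \<forall>h\<in>H. FO A (h,x) = x}"
  "Ar (fix_cat M C A H) = {f\<in>Ar C. \<forall>h\<in>H. FA A (Idt M h, f) = f}"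
  "Dom (fix_cat M C A H) = Dom C" "Cod (fix_cat M C A H) = Cod C"
  "Idt (fix_cat M C A H) = Idt C" "Cmp (fix_cat M C A H) = Cmp C"
  by (simp_all add: fix_cat_def)

lemma fix_cat_is_cat:
  assumes M: "is_cat M" and A: "is_functor (prod_cat M C) C A" and H: "H \<subseteq> Ob M"
  shows "is_cat (fix_cat M C A H)"
proof -
  interpret M: category M by (rule category.intro[OF M])
  interpret A: cat_functor "prod_cat M C" C A by (rule cat_functor.intro[OF A])
  have Idt_h: "Idt M h \<in> Ar M" "Dom M (Idt M h) = h" "Cod M (Idt M h) = h"
    "Cmp M (Idt M h) (Idt M h) = Idt M h" if "h \<in> H" for h
    using that H by auto
  show ?thesis
    unfolding fix_cat_def
  proof (rule subcategory_is_cat)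
    fix f assume f: "f \<in> {f \<in> Ar C. \<forall>h\<in>H. FA A (Idt M h, f) = f}"
    have "FO A (h, Dom C f) = Dom C f" "FO A (h, Cod C f) = Cod C f" if "h \<in> H" for h
      using f that A.Dom_FA[of "(Idt M h, f)"] A.Cod_FA[of "(Idt M h, f)"] Idt_h[OF that] by force+
    then show "Dom C f \<in> {x \<in> Ob C. \<forall>h\<in>H. FO A (h, x) = x} \<and> Cod C f \<in> {x \<in> Ob C. \<forall>h\<in>H. FO A (h, x) = x}"
      using f by auto
  next
    fix x assume x: "x \<in> {x \<in> Ob C. \<forall>h\<in>H. FO A (h, x) = x}"
    have "FA A (Idt M h, Idt C x) = Idt C x" if "h \<in> H" for h
      using x that A.FA_Idt[of "(h, x)"] H by force
    then show "Idt C x \<in> {f \<in> Ar C. \<forall>h\<in>H. FA A (Idt M h, f) = f}"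
      using x by auto
  next
    fix f g assume f: "f \<in> {f \<in> Ar C. \<forall>h\<in>H. FA A (Idt M h, f) = f}"
      and g: "g \<in> {f \<in> Ar C. \<forall>h\<in>H. FA A (Idt M h, f) = f}" and fg: "Cod C f = Dom C g"
    have "FA A (Idt M h, Cmp C g f) = Cmp C g f" if "h \<in> H" for h
      using f g fg that A.FA_Cmp[of "(Idt M h, f)" "(Idt M h, g)"] Idt_h[OF that] by force
    then show "Cmp C g f \<in> {f \<in> Ar C. \<forall>h\<in>H. FA A (Idt M h, f) = f}"
      using f g fg by auto
  qed (use A.D.is_cat in auto)
qed

lemma fix_cat_functor:
  assumes M: "is_cat M" and A: "is_functor (prod_cat M C) C A" and B: "is_functor (prod_cat M D) D B"
    and F: "is_functor C D F" and equiv: "equivariant M C D A B F" and H: "H \<subseteq> Ob M"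
  shows "is_functor (fix_cat M C A H) (fix_cat M D B H) F"
proof -
  interpret M: category M by (rule category.intro[OF M])
  interpret F: cat_functor C D F by (rule cat_functor.intro[OF F])
  have "FO F ` Ob (fix_cat M C A H) \<subseteq> Ob (fix_cat M D B H)"
    using equiv H unfolding equivariant_def by (auto simp: subset_iff) (metis)
  moreover have "FA F ` Ar (fix_cat M C A H) \<subseteq> Ar (fix_cat M D B H)"
    using equiv H unfolding equivariant_def by (auto simp: subset_iff) (metis M.Idt_in_Ar)
  ultimately show ?thesis
    using subcategory_functor[OF F fix_cat_is_cat[OF M A H, unfolded fix_cat_def]
        fix_cat_is_cat[OF M B H, unfolded fix_cat_def]]
    unfolding fix_cat_def by auto
qed

section \<open>Free actions and orbit categories\<close>

lemma (in group) orbit_translate: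
  assumes act_mult: "\<And>g. g \<in> carrier G \<Longrightarrow> act g (act h x) = act (g \<otimes> h) x" and h: "h \<in> carrier G"
  shows "{act g (act h x) | g. g \<in> carrier G} = {act g x | g. g \<in> carrier G}"
proof (intro equalityI subsetI)
  fix y assume "y \<in> {act g (act h x) | g. g \<in> carrier G}"
  then show "y \<in> {act g x | g. g \<in> carrier G}" using act_mult h by auto
next
  fix y assume "y \<in> {act g x | g. g \<in> carrier G}"
  then obtain g where g: "g \<in> carrier G" "y = act g x" by blast
  then have "y = act (g \<otimes> inv h) (act h x)" using act_mult h by (simp add: m_assoc)
  then show "y \<in> {act g (act h x) | g. g \<in> carrier G}" using g h by blast
qed

definition monoid_hom_on :: "('o \<times> 'o, 'a \<times> 'a, 'o, 'a) ftr \<Rightarrow> ('g,'z) monoid_scheme \<Rightarrow> 'o set \<Rightarrow> ('o \<Rightarrow> 'g) \<Rightarrow> bool" where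
  "monoid_hom_on T G H \<phi> \<longleftrightarrow> \<phi> \<in> H \<rightarrow> carrier G \<and> (\<forall>h\<in>H. \<forall>k\<in>H. \<phi> (FO T (h,k)) = \<phi> h \<otimes>\<^bsub>G\<^esub> \<phi> k)"

lemma monoid_hom_on_funcset: "monoid_hom_on T G H \<phi> \<Longrightarrow> \<phi> \<in> H \<rightarrow> carrier G"
  unfolding monoid_hom_on_def by blast

lemma graph_in_graph_subgroups:
  "H \<in> Fam \<Longrightarrow> monoid_hom_on T G H \<phi> \<Longrightarrow> {(h, \<phi> h) | h. h \<in> H} \<in> graph_subgroups T Fam G"
  unfolding graph_subgroups_def monoid_hom_on_def by blast

locale free_MG_cat =
  fixes M :: "('mo,'ma) cat" and T :: "('mo \<times> 'mo, 'ma \<times> 'ma, 'mo, 'ma) ftr" and u :: 'mo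
    and G :: "'g monoid" and C :: "('c,'ca) cat"
    and A :: "(('mo \<times> 'g) \<times> 'c, ('ma \<times> 'g) \<times> 'ca, 'c, 'ca) ftr"
  assumes strict_monoidal: "strict_monoidal M T u" and group: "group G"
    and action: "strict_action (prod_cat M (disc_cat G)) (prod_tensor T (disc_tensor G)) (u, \<one>\<^bsub>G\<^esub>) C A"
    and free: "free_G_action u G C A"
begin

sublocale G: group G by (rule group)

sublocale T: cat_functor "prod_cat M M" M T
  using strict_monoidal unfolding strict_monoidal_def by (simp add: cat_functor_def)

sublocale A: cat_functor "prod_cat (prod_cat M (disc_cat G)) C" C A
  using action unfolding strict_action_def by (simp add: cat_functor_def)

lemma u_in_Ob [simp]: "u \<in> Ob M"
  using strict_monoidal unfolding strict_monoidal_def by blast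

lemma T_unit [simp]: "x \<in> Ob M \<Longrightarrow> FO T (u,x) = x" "x \<in> Ob M \<Longrightarrow> FO T (x,u) = x"
  "a \<in> Ar M \<Longrightarrow> FA T (Idt M u, a) = a" "a \<in> Ar M \<Longrightarrow> FA T (a, Idt M u) = a"
  using strict_monoidal unfolding strict_monoidal_def by blast+

lemma act_in_Ob [simp]: "m \<in> Ob M \<Longrightarrow> g \<in> carrier G \<Longrightarrow> x \<in> Ob C \<Longrightarrow> FO A ((m,g),x) \<in> Ob C"
  and act_in_Ar [simp]: "a \<in> Ar M \<Longrightarrow> g \<in> carrier G \<Longrightarrow> s \<in> Ar C \<Longrightarrow> FA A ((a,g),s) \<in> Ar C"
  and Dom_act [simp]: "a \<in> Ar M \<Longrightarrow> g \<in> carrier G \<Longrightarrow> s \<in> Ar C \<Longrightarrow>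
        Dom C (FA A ((a,g),s)) = FO A ((Dom M a, g), Dom C s)"
  and Cod_act [simp]: "a \<in> Ar M \<Longrightarrow> g \<in> carrier G \<Longrightarrow> s \<in> Ar C \<Longrightarrow>
        Cod C (FA A ((a,g),s)) = FO A ((Cod M a, g), Cod C s)"
  and act_Idt: "m \<in> Ob M \<Longrightarrow> g \<in> carrier G \<Longrightarrow> x \<in> Ob C \<Longrightarrow>
        FA A ((Idt M m, g), Idt C x) = Idt C (FO A ((m,g),x))"
  using A.FO_in_Ob[of "((m,g),x)"] A.FA_in_Ar[of "((a,g),s)"] A.Dom_FA[of "((a,g),s)"]
    A.Cod_FA[of "((a,g),s)"] A.FA_Idt[of "((m,g),x)"] by simp_all

lemma act_Cmp:
  "a \<in> Ar M \<Longrightarrow> b \<in> Ar M \<Longrightarrow> Cod M a = Dom M b \<Longrightarrow> g \<in> carrier G \<Longrightarrow>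
   s \<in> Ar C \<Longrightarrow> t \<in> Ar C \<Longrightarrow> Cod C s = Dom C t \<Longrightarrow>
   FA A ((Cmp M b a, g), Cmp C t s) = Cmp C (FA A ((b,g),t)) (FA A ((a,g),s))"
  using A.FA_Cmp[of "((a,g),s)" "((b,g),t)"] by simp

lemma act_assoc_Ob:
  "m \<in> Ob M \<Longrightarrow> n \<in> Ob M \<Longrightarrow> g \<in> carrier G \<Longrightarrow> h \<in> carrier G \<Longrightarrow> x \<in> Ob C \<Longrightarrow>
   FO A ((FO T (m,n), g \<otimes>\<^bsub>G\<^esub> h), x) = FO A ((m,g), FO A ((n,h),x))"
  and act_assoc_Ar:
  "a \<in> Ar M \<Longrightarrow> b \<in> Ar M \<Longrightarrow> g \<in> carrier G \<Longrightarrow> h \<in> carrier G \<Longrightarrow> s \<in> Ar C \<Longrightarrow>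
   FA A ((FA T (a,b), g \<otimes>\<^bsub>G\<^esub> h), s) = FA A ((a,g), FA A ((b,h),s))"
  and act_unit [simp]: "x \<in> Ob C \<Longrightarrow> FO A ((u, \<one>\<^bsub>G\<^esub>), x) = x" "s \<in> Ar C \<Longrightarrow> FA A ((Idt M u, \<one>\<^bsub>G\<^esub>), s) = s"
  using action unfolding strict_action_def by simp_all

abbreviation gact :: "'g \<Rightarrow> 'c \<Rightarrow> 'c" where "gact g x \<equiv> FO A ((u,g),x)"
abbreviation gact_Ar :: "'g \<Rightarrow> 'ca \<Rightarrow> 'ca" where "gact_Ar g s \<equiv> FA A ((Idt M u, g), s)"
abbreviation mact :: "'mo \<Rightarrow> 'c \<Rightarrow> 'c" where "mact m x \<equiv> FO A ((m, \<one>\<^bsub>G\<^esub>), x)"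
abbreviation mact_Ar :: "'ma \<Rightarrow> 'ca \<Rightarrow> 'ca" where "mact_Ar a s \<equiv> FA A ((a, \<one>\<^bsub>G\<^esub>), s)"

lemma gact_mult: "g \<in> carrier G \<Longrightarrow> h \<in> carrier G \<Longrightarrow> x \<in> Ob C \<Longrightarrow> gact g (gact h x) = gact (g \<otimes>\<^bsub>G\<^esub> h) x"
  using act_assoc_Ob[of u u g h x] by simp

lemma gact_Ar_mult:
  "g \<in> carrier G \<Longrightarrow> h \<in> carrier G \<Longrightarrow> s \<in> Ar C \<Longrightarrow> gact_Ar g (gact_Ar h s) = gact_Ar (g \<otimes>\<^bsub>G\<^esub> h) s"
  using act_assoc_Ar[of "Idt M u" "Idt M u" g h s] by simp

lemma gact_Ar_Idt: "g \<in> carrier G \<Longrightarrow> x \<in> Ob C \<Longrightarrow> gact_Ar g (Idt C x) = Idt C (gact g x)"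
  using act_Idt[of u g x] by simp

lemma gact_Ar_Cmp:
  "g \<in> carrier G \<Longrightarrow> s \<in> Ar C \<Longrightarrow> t \<in> Ar C \<Longrightarrow> Cod C s = Dom C t \<Longrightarrow>
   gact_Ar g (Cmp C t s) = Cmp C (gact_Ar g t) (gact_Ar g s)"
  using act_Cmp[of "Idt M u" "Idt M u" g s t] by simp

lemma mact_gact: "m \<in> Ob M \<Longrightarrow> g \<in> carrier G \<Longrightarrow> x \<in> Ob C \<Longrightarrow> mact m (gact g x) = FO A ((m,g),x)"
  and gact_mact: "m \<in> Ob M \<Longrightarrow> g \<in> carrier G \<Longrightarrow> x \<in> Ob C \<Longrightarrow> gact g (mact m x) = FO A ((m,g),x)"
  using act_assoc_Ob[of m u "\<one>\<^bsub>G\<^esub>" g x] act_assoc_Ob[of u m g "\<one>\<^bsub>G\<^esub>" x] by simp_all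

lemma mact_gact_Ar: "a \<in> Ar M \<Longrightarrow> g \<in> carrier G \<Longrightarrow> s \<in> Ar C \<Longrightarrow> mact_Ar a (gact_Ar g s) = FA A ((a,g),s)"
  and gact_mact_Ar: "a \<in> Ar M \<Longrightarrow> g \<in> carrier G \<Longrightarrow> s \<in> Ar C \<Longrightarrow> gact_Ar g (mact_Ar a s) = FA A ((a,g),s)"
  using act_assoc_Ar[of a "Idt M u" "\<one>\<^bsub>G\<^esub>" g s] act_assoc_Ar[of "Idt M u" a g "\<one>\<^bsub>G\<^esub>" s] by simp_all

lemma mact_mult: "h \<in> Ob M \<Longrightarrow> k \<in> Ob M \<Longrightarrow> x \<in> Ob C \<Longrightarrow> mact h (mact k x) = mact (FO T (h,k)) x"
  using act_assoc_Ob[of h k "\<one>\<^bsub>G\<^esub>" "\<one>\<^bsub>G\<^esub>" x] by simp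

lemma gact_eq_imp_eq:
  assumes x: "x \<in> Ob C" and g: "g \<in> carrier G" and h: "h \<in> carrier G" and eq: "gact g x = gact h x"
  shows "g = h"
proof -
  have "gact (inv\<^bsub>G\<^esub> h \<otimes>\<^bsub>G\<^esub> g) x = gact (inv\<^bsub>G\<^esub> h \<otimes>\<^bsub>G\<^esub> h) x"
    using x g h by (simp only: gact_mult[symmetric] eq G.inv_closed)
  then have "inv\<^bsub>G\<^esub> h \<otimes>\<^bsub>G\<^esub> g = \<one>\<^bsub>G\<^esub>"
    using free x g h unfolding free_G_action_def by simp
  then show ?thesis
    using g h by (metis G.inv_closed G.inv_inv G.inv_equality)
qed

abbreviation orbit :: "'c \<Rightarrow> 'c set" where "orbit x \<equiv> orb_o u G A x"
abbreviation orbit_Ar :: "'ca \<Rightarrow> 'ca set" where "orbit_Ar s \<equiv> orb_a M u G A s"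

lemma mem_orbit: "y \<in> orbit x \<longleftrightarrow> (\<exists>g\<in>carrier G. y = gact g x)"
  and mem_orbit_Ar: "t \<in> orbit_Ar s \<longleftrightarrow> (\<exists>g\<in>carrier G. t = gact_Ar g s)"
  unfolding orb_o_def orb_a_def by auto

lemma orbit_self: "x \<in> Ob C \<Longrightarrow> x \<in> orbit x"
  and orbit_Ar_self: "s \<in> Ar C \<Longrightarrow> s \<in> orbit_Ar s"
  unfolding mem_orbit mem_orbit_Ar by (metis G.one_closed act_unit)+

lemma orbit_subset: "x \<in> Ob C \<Longrightarrow> orbit x \<subseteq> Ob C"
  and orbit_Ar_subset: "s \<in> Ar C \<Longrightarrow> orbit_Ar s \<subseteq> Ar C"
  unfolding orb_o_def orb_a_def by auto

lemma orbit_eq: assumes "x \<in> Ob C" "y \<in> orbit x" shows "orbit y = orbit x"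
proof -
  obtain h where "h \<in> carrier G" "y = gact h x" using assms(2) unfolding mem_orbit by blast
  then show ?thesis
    unfolding orb_o_def using G.orbit_translate[where act = "\<lambda>g x. gact g x"] gact_mult assms(1) by simp
qed

lemma orbit_Ar_eq: assumes "s \<in> Ar C" "t \<in> orbit_Ar s" shows "orbit_Ar t = orbit_Ar s"
proof -
  obtain h where "h \<in> carrier G" "t = gact_Ar h s" using assms(2) unfolding mem_orbit_Ar by blast
  then show ?thesis
    unfolding orb_a_def using G.orbit_translate[where act = "\<lambda>g s. gact_Ar g s"] gact_Ar_mult assms(1) by simp
qed

lemma orbit_eq_iff: "x \<in> Ob C \<Longrightarrow> y \<in> Ob C \<Longrightarrow> orbit x = orbit y \<longleftrightarrow> y \<in> orbit x"
  and orbit_Ar_eq_iff: "s \<in> Ar C \<Longrightarrow> t \<in> Ar C \<Longrightarrow> orbit_Ar s = orbit_Ar t \<longleftrightarrow> t \<in> orbit_Ar s"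
  by (metis orbit_eq orbit_self, metis orbit_Ar_eq orbit_Ar_self)

lemma Dom_image_orbit_Ar: "s \<in> Ar C \<Longrightarrow> Dom C ` orbit_Ar s = orbit (Dom C s)"
  and Cod_image_orbit_Ar: "s \<in> Ar C \<Longrightarrow> Cod C ` orbit_Ar s = orbit (Cod C s)"
  and Idt_image_orbit: "x \<in> Ob C \<Longrightarrow> Idt C ` orbit x = orbit_Ar (Idt C x)"
  unfolding orb_o_def orb_a_def Setcompr_eq_image image_image
  by (simp_all add: gact_Ar_Idt cong: image_cong)

text \<open>Composable representatives of two composable orbits are unique up to a common translation,
  by freeness on the middle object.\<close>

lemma Cmp_orbit_Ar:
  assumes s: "s \<in> Ar C" and t: "t \<in> Ar C" and st: "Cod C s = Dom C t"
  shows "{Cmp C t' s' | t' s'. t' \<in> orbit_Ar t \<and> s' \<in> orbit_Ar s \<and> Cod C s' = Dom C t'} = orbit_Ar (Cmp C t s)"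
proof (intro equalityI subsetI)
  fix z assume "z \<in> {Cmp C t' s' | t' s'. t' \<in> orbit_Ar t \<and> s' \<in> orbit_Ar s \<and> Cod C s' = Dom C t'}"
  then obtain g h where g: "g \<in> carrier G" and h: "h \<in> carrier G" and z: "z = Cmp C (gact_Ar g t) (gact_Ar h s)"
    and composable: "Cod C (gact_Ar h s) = Dom C (gact_Ar g t)"
    unfolding mem_orbit_Ar by blast
  have "h = g"
    using composable g h s t st by (intro gact_eq_imp_eq[of "Cod C s"]) simp_all
  then show "z \<in> orbit_Ar (Cmp C t s)"
    using z g s t st unfolding mem_orbit_Ar by (auto simp: gact_Ar_Cmp)
next
  fix z assume "z \<in> orbit_Ar (Cmp C t s)"
  then obtain g where g: "g \<in> carrier G" "z = gact_Ar g (Cmp C t s)" unfolding mem_orbit_Ar by blast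
  then have "z = Cmp C (gact_Ar g t) (gact_Ar g s) \<and> gact_Ar g t \<in> orbit_Ar t \<and> gact_Ar g s \<in> orbit_Ar s \<and>
      Cod C (gact_Ar g s) = Dom C (gact_Ar g t)"
    using s t st unfolding mem_orbit_Ar by (auto simp: gact_Ar_Cmp)
  then show "z \<in> {Cmp C t' s' | t' s'. t' \<in> orbit_Ar t \<and> s' \<in> orbit_Ar s \<and> Cod C s' = Dom C t'}"
    by blast
qed

abbreviation Q :: "('c set, 'ca set) cat" where "Q \<equiv> quot_cat M u G C A"

lemma quot_cat_simps:
  "Ob Q = orbit ` Ob C" "Ar Q = orbit_Ar ` Ar C" "Dom Q S = Dom C ` S" "Cod Q S = Cod C ` S"
  "Idt Q X = Idt C ` X" "Cmp Q R S = {Cmp C t s | t s. t \<in> R \<and> s \<in> S \<and> Cod C s = Dom C t}"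
  by (simp_all add: quot_cat_def)

lemma orbit_in_Ob_Q [simp]: "x \<in> Ob C \<Longrightarrow> orbit x \<in> Ob Q"
  and orbit_Ar_in_Ar_Q [simp]: "s \<in> Ar C \<Longrightarrow> orbit_Ar s \<in> Ar Q"
  and Dom_Q [simp]: "s \<in> Ar C \<Longrightarrow> Dom Q (orbit_Ar s) = orbit (Dom C s)"
  and Cod_Q [simp]: "s \<in> Ar C \<Longrightarrow> Cod Q (orbit_Ar s) = orbit (Cod C s)"
  and Idt_Q [simp]: "x \<in> Ob C \<Longrightarrow> Idt Q (orbit x) = orbit_Ar (Idt C x)"
  by (simp_all add: quot_cat_simps Dom_image_orbit_Ar Cod_image_orbit_Ar Idt_image_orbit)

lemma Cmp_Q [simp]:
  "s \<in> Ar C \<Longrightarrow> t \<in> Ar C \<Longrightarrow> Cod C s = Dom C t \<Longrightarrow> Cmp Q (orbit_Ar t) (orbit_Ar s) = orbit_Ar (Cmp C t s)"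
  by (simp add: quot_cat_simps Cmp_orbit_Ar)

lemma Ob_Q_orbit: "X \<in> Ob Q \<Longrightarrow> x \<in> X \<Longrightarrow> x \<in> Ob C \<and> X = orbit x"
  and Ar_Q_orbit: "S \<in> Ar Q \<Longrightarrow> s \<in> S \<Longrightarrow> s \<in> Ar C \<and> S = orbit_Ar s"
  unfolding quot_cat_simps using orbit_eq orbit_subset orbit_Ar_eq orbit_Ar_subset by blast+

lemma Ob_Q_nonempty: "X \<in> Ob Q \<Longrightarrow> \<exists>x. x \<in> X"
  and Ar_Q_nonempty: "S \<in> Ar Q \<Longrightarrow> \<exists>s. s \<in> S"
  unfolding quot_cat_simps using orbit_self orbit_Ar_self by blast+

lemma Ar_Q_composable:
  assumes s: "s \<in> Ar C" and R: "R \<in> Ar Q" and sR: "orbit (Cod C s) = Dom Q R"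
  obtains t where "t \<in> Ar C" "R = orbit_Ar t" "Dom C t = Cod C s"
proof -
  have "Cod C s \<in> Dom C ` R"
    using sR orbit_self s unfolding quot_cat_simps by (metis A.D.Cod_in_Ob)
  then show ?thesis
    using Ar_Q_orbit R that by fastforce
qed

lemma quot_cat_is_cat: "is_cat Q"
  unfolding is_cat_def
proof (intro conjI ballI impI)
  fix S assume "S \<in> Ar Q"
  then obtain s where s: "s \<in> Ar C" "S = orbit_Ar s" unfolding quot_cat_simps by blast
  then show "Dom Q S \<in> Ob Q" "Cod Q S \<in> Ob Q" "Cmp Q S (Idt Q (Dom Q S)) = S" "Cmp Q (Idt Q (Cod Q S)) S = S"
    by simp_all
next
  fix X assume "X \<in> Ob Q"
  then obtain x where "x \<in> Ob C" "X = orbit x" unfolding quot_cat_simps by blast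
  then show "Idt Q X \<in> Ar Q" "Dom Q (Idt Q X) = X" "Cod Q (Idt Q X) = X"
    by simp_all
next
  fix S R assume S: "S \<in> Ar Q" and R: "R \<in> Ar Q" and SR: "Cod Q S = Dom Q R"
  obtain s where s: "s \<in> Ar C" "S = orbit_Ar s" using S unfolding quot_cat_simps by blast
  obtain t where "t \<in> Ar C" "R = orbit_Ar t" "Dom C t = Cod C s"
    using Ar_Q_composable[OF s(1) R] SR s by auto
  then show "Cmp Q R S \<in> Ar Q" "Dom Q (Cmp Q R S) = Dom Q S" "Cod Q (Cmp Q R S) = Cod Q R"
    using s by simp_all
next
  fix S R V assume S: "S \<in> Ar Q" and R: "R \<in> Ar Q" and V: "V \<in> Ar Q"
    and composable: "Cod Q S = Dom Q R \<and> Cod Q R = Dom Q V"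
  obtain s where s: "s \<in> Ar C" "S = orbit_Ar s" using S unfolding quot_cat_simps by blast
  obtain t where t: "t \<in> Ar C" "R = orbit_Ar t" "Dom C t = Cod C s"
    using Ar_Q_composable[OF s(1) R] composable s by auto
  obtain v where "v \<in> Ar C" "V = orbit_Ar v" "Dom C v = Cod C t"
    using Ar_Q_composable[OF t(1) V] composable t by auto
  then show "Cmp Q V (Cmp Q R S) = Cmp Q (Cmp Q V R) S"
    using s t by (simp add: A.D.Cmp_assoc)
qed

abbreviation QA :: "('mo \<times> 'c set, 'ma \<times> 'ca set, 'c set, 'ca set) ftr" where "QA \<equiv> quot_action G A"

lemma QA_orbit [simp]: "m \<in> Ob M \<Longrightarrow> x \<in> Ob C \<Longrightarrow> FO QA (m, orbit x) = orbit (mact m x)"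
  and QA_orbit_Ar [simp]: "a \<in> Ar M \<Longrightarrow> s \<in> Ar C \<Longrightarrow> FA QA (a, orbit_Ar s) = orbit_Ar (mact_Ar a s)"
  unfolding quot_action_def orb_o_def orb_a_def Setcompr_eq_image
  by (simp_all add: image_image mact_gact gact_mact mact_gact_Ar gact_mact_Ar cong: image_cong)

lemma quot_action_functor: "is_functor (prod_cat M Q) Q QA"
  unfolding is_functor_def
proof (intro conjI ballI impI)
  show "is_cat Q" by (rule quot_cat_is_cat)
  then show "is_cat (prod_cat M Q)" by (intro prod_cat_is_cat T.D.is_cat)
next
  fix p assume "p \<in> Ob (prod_cat M Q)"
  then obtain m x where "m \<in> Ob M" "x \<in> Ob C" "p = (m, orbit x)" by (auto simp: quot_cat_simps)
  then show "FO QA p \<in> Ob Q" "FA QA (Idt (prod_cat M Q) p) = Idt Q (FO QA p)"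
    by (simp_all add: act_Idt)
next
  fix p assume "p \<in> Ar (prod_cat M Q)"
  then obtain a s where "a \<in> Ar M" "s \<in> Ar C" "p = (a, orbit_Ar s)" by (auto simp: quot_cat_simps)
  then show "FA QA p \<in> Ar Q" "Dom Q (FA QA p) = FO QA (Dom (prod_cat M Q) p)"
    "Cod Q (FA QA p) = FO QA (Cod (prod_cat M Q) p)"
    by simp_all
next
  fix p q assume p: "p \<in> Ar (prod_cat M Q)" and q: "q \<in> Ar (prod_cat M Q)"
    and pq: "Cod (prod_cat M Q) p = Dom (prod_cat M Q) q"
  obtain a s where a: "a \<in> Ar M" and s: "s \<in> Ar C" and p_eq: "p = (a, orbit_Ar s)"
    using p by (auto simp: quot_cat_simps)
  obtain b R where b: "b \<in> Ar M" and R: "R \<in> Ar Q" and q_eq: "q = (b, R)"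
    using q by auto
  obtain t where t: "t \<in> Ar C" "R = orbit_Ar t" "Dom C t = Cod C s"
    using Ar_Q_composable[OF s R] pq p_eq q_eq s by auto
  have "Cod M a = Dom M b" using pq p_eq q_eq by simp
  then show "FA QA (Cmp (prod_cat M Q) q p) = Cmp Q (FA QA q) (FA QA p)"
    using a b s t p_eq q_eq by (simp add: act_Cmp[of a b "\<one>\<^bsub>G\<^esub>" s t, symmetric])
qed

abbreviation QH :: "'mo set \<Rightarrow> ('c set, 'ca set) cat" where "QH H \<equiv> fix_cat M Q QA H"

abbreviation graph_fix :: "'mo set \<Rightarrow> ('mo \<Rightarrow> 'g) \<Rightarrow> ('c,'ca) cat" where
  "graph_fix H \<phi> \<equiv> fix_cat (prod_cat M (disc_cat G)) C A {(h, \<phi> h) | h. h \<in> H}"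

lemma orbit_in_QH_iff:
  assumes "x \<in> Ob C" "H \<subseteq> Ob M"
  shows "orbit x \<in> Ob (QH H) \<longleftrightarrow> (\<forall>h\<in>H. \<exists>g\<in>carrier G. mact h x = gact g x)"
proof -
  have "FO QA (h, orbit x) = orbit x \<longleftrightarrow> (\<exists>g\<in>carrier G. mact h x = gact g x)" if "h \<in> H" for h
  proof -
    have "h \<in> Ob M" using assms that by auto
    then show ?thesis
      using assms orbit_eq_iff[of x "mact h x"] unfolding mem_orbit by auto
  qed
  then show ?thesis using assms(1) by auto
qed

lemma orbit_Ar_in_QH_iff:
  assumes "s \<in> Ar C" "H \<subseteq> Ob M"
  shows "orbit_Ar s \<in> Ar (QH H) \<longleftrightarrow> (\<forall>h\<in>H. \<exists>g\<in>carrier G. mact_Ar (Idt M h) s = gact_Ar g s)"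
proof -
  have "FA QA (Idt M h, orbit_Ar s) = orbit_Ar s \<longleftrightarrow> (\<exists>g\<in>carrier G. mact_Ar (Idt M h) s = gact_Ar g s)"
    if "h \<in> H" for h
  proof -
    have "Idt M h \<in> Ar M" using assms that by auto
    then show ?thesis
      using assms orbit_Ar_eq_iff[of s "mact_Ar (Idt M h) s"] unfolding mem_orbit_Ar by auto
  qed
  then show ?thesis using assms(1) by auto
qed

lemma graph_fix_Ob_iff:
  assumes "H \<subseteq> Ob M" "\<phi> \<in> H \<rightarrow> carrier G"
  shows "x \<in> Ob (graph_fix H \<phi>) \<longleftrightarrow> x \<in> Ob C \<and> (\<forall>h\<in>H. mact h x = gact (inv\<^bsub>G\<^esub> \<phi> h) x)"
proof -
  have "FO A ((h, \<phi> h), x) = x \<longleftrightarrow> mact h x = gact (inv\<^bsub>G\<^esub> \<phi> h) x" if "x \<in> Ob C" "h \<in> H" for h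
  proof -
    have h: "h \<in> Ob M" "\<phi> h \<in> carrier G" using assms that by auto
    have "FO A ((h, \<phi> h), x) = gact (\<phi> h) (mact h x)" using h that by (simp add: gact_mact)
    moreover have "gact (inv\<^bsub>G\<^esub> \<phi> h) (gact (\<phi> h) y) = y" "gact (\<phi> h) (gact (inv\<^bsub>G\<^esub> \<phi> h) y) = y"
      if "y \<in> Ob C" for y
      using h that by (simp_all add: gact_mult)
    ultimately show ?thesis using h that by (metis act_in_Ob G.one_closed)
  qed
  then show ?thesis by auto
qed

lemma graph_fix_Ar_iff:
  assumes "H \<subseteq> Ob M" "\<phi> \<in> H \<rightarrow> carrier G"
  shows "s \<in> Ar (graph_fix H \<phi>) \<longleftrightarrow> s \<in> Ar C \<and> (\<forall>h\<in>H. mact_Ar (Idt M h) s = gact_Ar (inv\<^bsub>G\<^esub> \<phi> h) s)"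
proof -
  have "FA A ((Idt M h, \<phi> h), s) = s \<longleftrightarrow> mact_Ar (Idt M h) s = gact_Ar (inv\<^bsub>G\<^esub> \<phi> h) s"
    if "s \<in> Ar C" "h \<in> H" for h
  proof -
    have h: "Idt M h \<in> Ar M" "\<phi> h \<in> carrier G" using assms that by auto
    have "FA A ((Idt M h, \<phi> h), s) = gact_Ar (\<phi> h) (mact_Ar (Idt M h) s)" using h that by (simp add: gact_mact_Ar)
    moreover have "gact_Ar (inv\<^bsub>G\<^esub> \<phi> h) (gact_Ar (\<phi> h) t) = t" "gact_Ar (\<phi> h) (gact_Ar (inv\<^bsub>G\<^esub> \<phi> h) t) = t"
      if "t \<in> Ar C" for t
      using h that by (simp_all add: gact_Ar_mult)
    ultimately show ?thesis using h that by (metis act_in_Ar G.one_closed)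
  qed
  then show ?thesis by auto
qed

lemma orbit_in_QH_if_graph_fix:
  assumes H: "H \<subseteq> Ob M" and \<phi>: "\<phi> \<in> H \<rightarrow> carrier G" and x: "x \<in> Ob (graph_fix H \<phi>)"
  shows "orbit x \<in> Ob (QH H)"
proof -
  have "x \<in> Ob C" "\<forall>h\<in>H. mact h x = gact (inv\<^bsub>G\<^esub> \<phi> h) x"
    using x graph_fix_Ob_iff[OF H \<phi>] by blast+
  moreover have "inv\<^bsub>G\<^esub> \<phi> h \<in> carrier G" if "h \<in> H" for h
    using \<phi> that by auto
  ultimately show ?thesis
    using orbit_in_QH_iff[OF _ H] by blast
qed

lemma orbit_Ar_in_QH_if_graph_fix:
  assumes H: "H \<subseteq> Ob M" and \<phi>: "\<phi> \<in> H \<rightarrow> carrier G" and s: "s \<in> Ar (graph_fix H \<phi>)"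
  shows "orbit_Ar s \<in> Ar (QH H)"
proof -
  have "s \<in> Ar C" "\<forall>h\<in>H. mact_Ar (Idt M h) s = gact_Ar (inv\<^bsub>G\<^esub> \<phi> h) s"
    using s graph_fix_Ar_iff[OF H \<phi>] by blast+
  moreover have "inv\<^bsub>G\<^esub> \<phi> h \<in> carrier G" if "h \<in> H" for h
    using \<phi> that by auto
  ultimately show ?thesis
    using orbit_Ar_in_QH_iff[OF _ H] by blast
qed

lemma graph_fix_if_Dom_graph_fix:
  assumes H: "H \<subseteq> Ob M" and \<phi>: "\<phi> \<in> H \<rightarrow> carrier G" and s: "s \<in> Ar C"
    and S: "orbit_Ar s \<in> Ar (QH H)" and Dom_s: "Dom C s \<in> Ob (graph_fix H \<phi>)"
  shows "s \<in> Ar (graph_fix H \<phi>)"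
proof -
  have "mact_Ar (Idt M h) s = gact_Ar (inv\<^bsub>G\<^esub> \<phi> h) s" if h: "h \<in> H" for h
  proof -
    have hM: "h \<in> Ob M" and \<phi>h: "inv\<^bsub>G\<^esub> \<phi> h \<in> carrier G" using H \<phi> h by auto
    obtain g where g: "g \<in> carrier G" "mact_Ar (Idt M h) s = gact_Ar g s"
      using S orbit_Ar_in_QH_iff[OF s H] h by blast
    have "gact g (Dom C s) = mact h (Dom C s)"
      using arg_cong[OF g(2), of "Dom C"] g(1) hM s by simp
    also have "\<dots> = gact (inv\<^bsub>G\<^esub> \<phi> h) (Dom C s)"
      using Dom_s graph_fix_Ob_iff[OF H \<phi>] h by blast
    finally have "g = inv\<^bsub>G\<^esub> \<phi> h"
      using g(1) \<phi>h s by (intro gact_eq_imp_eq[of "Dom C s"]) simp_all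
    then show ?thesis using g(2) by simp
  qed
  then show ?thesis using s graph_fix_Ar_iff[OF H \<phi>] by blast
qed

text \<open>The element \<open>\<gamma> h\<close> moving \<open>x\<close> like \<open>h\<close> is unique by freeness, and \<open>\<gamma>\<close> reverses
  products because the actions of \<open>M\<close> and \<open>G\<close> commute.\<close>

lemma graph_fix_if_orbit_in_QH:
  assumes H: "mon_subgroup M T u H" and x: "x \<in> Ob C" and X: "orbit x \<in> Ob (QH H)"
  obtains \<phi> where "monoid_hom_on T G H \<phi>" "x \<in> Ob (graph_fix H \<phi>)"
proof -
  have HM: "H \<subseteq> Ob M" and H_closed: "\<And>h k. h \<in> H \<Longrightarrow> k \<in> H \<Longrightarrow> FO T (h,k) \<in> H"
    using H unfolding mon_subgroup_def by auto
  obtain \<gamma> where \<gamma>: "\<And>h. h \<in> H \<Longrightarrow> \<gamma> h \<in> carrier G \<and> mact h x = gact (\<gamma> h) x"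
    using X orbit_in_QH_iff[OF x HM] by metis
  have \<gamma>_antihom: "\<gamma> (FO T (h,k)) = \<gamma> k \<otimes>\<^bsub>G\<^esub> \<gamma> h" if h: "h \<in> H" and k: "k \<in> H" for h k
  proof (rule gact_eq_imp_eq[OF x])
    have hk: "h \<in> Ob M" "k \<in> Ob M" using h k HM by auto
    have "gact (\<gamma> (FO T (h,k))) x = mact h (mact k x)"
      using \<gamma>[OF H_closed[OF h k]] hk x by (simp add: mact_mult)
    also have "\<dots> = gact (\<gamma> k) (mact h x)"
      using \<gamma>[OF k] hk x by (simp add: mact_gact gact_mact)
    also have "\<dots> = gact (\<gamma> k \<otimes>\<^bsub>G\<^esub> \<gamma> h) x"
      using \<gamma>[OF h] \<gamma>[OF k] x by (simp add: gact_mult)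
    finally show "gact (\<gamma> (FO T (h,k))) x = gact (\<gamma> k \<otimes>\<^bsub>G\<^esub> \<gamma> h) x" .
    show "\<gamma> (FO T (h,k)) \<in> carrier G" "\<gamma> k \<otimes>\<^bsub>G\<^esub> \<gamma> h \<in> carrier G"
      using \<gamma> h k H_closed by auto
  qed
  define \<phi> where "\<phi> h = inv\<^bsub>G\<^esub> \<gamma> h" for h
  show thesis
  proof (rule that)
    show hom: "monoid_hom_on T G H \<phi>"
      unfolding monoid_hom_on_def \<phi>_def using \<gamma> \<gamma>_antihom by (auto simp: G.inv_mult_group)
    have "\<forall>h\<in>H. mact h x = gact (inv\<^bsub>G\<^esub> \<phi> h) x"
      unfolding \<phi>_def using \<gamma> by simp
    then show "x \<in> Ob (graph_fix H \<phi>)"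
      using graph_fix_Ob_iff[OF HM] hom x unfolding monoid_hom_on_def by blast
  qed
qed

end

section \<open>The induced functor of orbit categories\<close>

locale free_MG_functor =
  C: free_MG_cat M T u G C A + D: free_MG_cat M T u G D B
  for M :: "('mo,'ma) cat" and T u and G :: "'g monoid" and C :: "('c,'ca) cat" and A
    and D :: "('d,'da) cat" and B +
  fixes f :: "('c,'ca,'d,'da) ftr"
  assumes f_functor: "is_functor C D f" and f_equivariant: "equivariant (prod_cat M (disc_cat G)) C D A B f"
begin

sublocale f: cat_functor C D f by (rule cat_functor.intro[OF f_functor])

lemma f_act_Ob: "m \<in> Ob M \<Longrightarrow> g \<in> carrier G \<Longrightarrow> x \<in> Ob C \<Longrightarrow> FO f (FO A ((m,g),x)) = FO B ((m,g), FO f x)"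
  and f_act_Ar: "a \<in> Ar M \<Longrightarrow> g \<in> carrier G \<Longrightarrow> s \<in> Ar C \<Longrightarrow> FA f (FA A ((a,g),s)) = FA B ((a,g), FA f s)"
  using f_equivariant unfolding equivariant_def by auto

lemma image_f_orbit: "x \<in> Ob C \<Longrightarrow> FO f ` C.orbit x = D.orbit (FO f x)"
  and image_f_orbit_Ar: "s \<in> Ar C \<Longrightarrow> FA f ` C.orbit_Ar s = D.orbit_Ar (FA f s)"
  unfolding orb_o_def orb_a_def Setcompr_eq_image
  by (simp_all add: image_image f_act_Ob f_act_Ar cong: image_cong)

abbreviation qf :: "('c set, 'ca set, 'd set, 'da set) ftr" where "qf \<equiv> quot_ftr f"

lemma quot_ftr_orbit [simp]: "x \<in> Ob C \<Longrightarrow> FO qf (C.orbit x) = D.orbit (FO f x)"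
  and quot_ftr_orbit_Ar [simp]: "s \<in> Ar C \<Longrightarrow> FA qf (C.orbit_Ar s) = D.orbit_Ar (FA f s)"
  by (simp_all add: quot_ftr_def image_f_orbit image_f_orbit_Ar)

lemma quot_ftr_functor: "is_functor C.Q D.Q qf"
  unfolding is_functor_def
proof (intro conjI ballI impI)
  show "is_cat C.Q" "is_cat D.Q" by (rule C.quot_cat_is_cat, rule D.quot_cat_is_cat)
next
  fix X assume "X \<in> Ob C.Q"
  then obtain x where "x \<in> Ob C" "X = C.orbit x" by (auto simp: C.quot_cat_simps)
  then show "FO qf X \<in> Ob D.Q" "FA qf (Idt C.Q X) = Idt D.Q (FO qf X)" by simp_all
next
  fix S assume "S \<in> Ar C.Q"
  then obtain s where "s \<in> Ar C" "S = C.orbit_Ar s" by (auto simp: C.quot_cat_simps)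
  then show "FA qf S \<in> Ar D.Q" "Dom D.Q (FA qf S) = FO qf (Dom C.Q S)" "Cod D.Q (FA qf S) = FO qf (Cod C.Q S)"
    by simp_all
next
  fix S R assume S: "S \<in> Ar C.Q" and R: "R \<in> Ar C.Q" and SR: "Cod C.Q S = Dom C.Q R"
  obtain s where s: "s \<in> Ar C" "S = C.orbit_Ar s" using S by (auto simp: C.quot_cat_simps)
  obtain t where "t \<in> Ar C" "R = C.orbit_Ar t" "Dom C t = Cod C s"
    using C.Ar_Q_composable[OF s(1) R] SR s by auto
  then show "FA qf (Cmp C.Q R S) = Cmp D.Q (FA qf R) (FA qf S)" using s by simp
qed

lemma quot_ftr_equivariant: "equivariant M C.Q D.Q C.QA D.QA qf"
  unfolding equivariant_def
proof (intro conjI ballI)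
  fix m X assume m: "m \<in> Ob M" and "X \<in> Ob C.Q"
  then obtain x where "x \<in> Ob C" "X = C.orbit x" by (auto simp: C.quot_cat_simps)
  then show "FO qf (FO C.QA (m, X)) = FO D.QA (m, FO qf X)" using m by (simp add: f_act_Ob)
next
  fix a S assume a: "a \<in> Ar M" and "S \<in> Ar C.Q"
  then obtain s where "s \<in> Ar C" "S = C.orbit_Ar s" by (auto simp: C.quot_cat_simps)
  then show "FA qf (FA C.QA (a, S)) = FA D.QA (a, FA qf S)" using a by (simp add: f_act_Ar)
qed

lemma quot_ftr_QH_functor: "H \<subseteq> Ob M \<Longrightarrow> is_functor (C.QH H) (D.QH H) qf"
  by (rule fix_cat_functor[OF C.T.D.is_cat C.quot_action_functor D.quot_action_functor
        quot_ftr_functor quot_ftr_equivariant])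

lemma f_gact_fixed_imp_one:
  assumes "x \<in> Ob C" "g \<in> carrier G" "FO f (C.gact g x) = FO f x"
  shows "g = \<one>\<^bsub>G\<^esub>"
  using assms by (intro D.gact_eq_imp_eq[of "FO f x"]) (simp_all add: f_act_Ob)

lemma representatives_agree:
  assumes a1: "a1 \<in> Ar C" and a2: "a2 \<in> Ar C" and dom: "Dom C a2 = Dom C a1"
    and cod: "Cod C a2 \<in> C.orbit (Cod C a1)" and img: "FA f a2 \<in> D.orbit_Ar (FA f a1)"
  shows "FA f a2 = FA f a1 \<and> Cod C a2 = Cod C a1"
proof
  obtain g where g: "g \<in> carrier G" "FA f a2 = D.gact_Ar g (FA f a1)"
    using img unfolding D.mem_orbit_Ar by blast
  have "D.gact g (FO f (Dom C a1)) = FO f (Dom C a1)"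
    using arg_cong[OF g(2), of "Dom D"] g(1) a1 a2 dom by simp
  then have "g = \<one>\<^bsub>G\<^esub>"
    using g(1) a1 by (intro D.gact_eq_imp_eq[of "FO f (Dom C a1)"]) simp_all
  then show fa: "FA f a2 = FA f a1" using g a1 by simp
  obtain k where k: "k \<in> carrier G" "Cod C a2 = C.gact k (Cod C a1)"
    using cod unfolding C.mem_orbit by blast
  have "FO f (C.gact k (Cod C a1)) = FO f (Cod C a1)"
    using arg_cong[OF fa, of "Cod D"] k a1 a2 by simp
  then have "k = \<one>\<^bsub>G\<^esub>"
    using k(1) a1 by (intro f_gact_fixed_imp_one) simp_all
  then show "Cod C a2 = Cod C a1" using k a1 by simp
qed

lemma graph_fix_if_image_graph_fix:
  assumes H: "H \<subseteq> Ob M" and \<phi>: "\<phi> \<in> H \<rightarrow> carrier G" and y: "y \<in> Ob C"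
    and Y: "C.orbit y \<in> Ob (C.QH H)" and fy: "FO f y \<in> Ob (D.graph_fix H \<phi>)"
  shows "y \<in> Ob (C.graph_fix H \<phi>)"
proof -
  have "C.mact h y = C.gact (inv\<^bsub>G\<^esub> \<phi> h) y" if h: "h \<in> H" for h
  proof -
    have hM: "h \<in> Ob M" and \<phi>h: "inv\<^bsub>G\<^esub> \<phi> h \<in> carrier G" using H \<phi> h by auto
    obtain g where g: "g \<in> carrier G" "C.mact h y = C.gact g y"
      using Y C.orbit_in_QH_iff[OF y H] h by blast
    have "D.gact g (FO f y) = D.mact h (FO f y)"
      using g hM y by (simp add: f_act_Ob[symmetric])
    also have "\<dots> = D.gact (inv\<^bsub>G\<^esub> \<phi> h) (FO f y)"
      using fy D.graph_fix_Ob_iff[OF H \<phi>] h by blast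
    finally have "g = inv\<^bsub>G\<^esub> \<phi> h"
      using g(1) \<phi>h y by (intro D.gact_eq_imp_eq[of "FO f y"]) simp_all
    then show ?thesis using g(2) by simp
  qed
  then show ?thesis using y C.graph_fix_Ob_iff[OF H \<phi>] by blast
qed

context
  fixes H :: "'mo set"
  assumes H: "mon_subgroup M T u H"
    and graph_equivalence: "\<And>\<phi>. monoid_hom_on T G H \<phi> \<Longrightarrow> cat_equivalence (C.graph_fix H \<phi>) (D.graph_fix H \<phi>) f"
begin

lemma H_in_Ob: "H \<subseteq> Ob M"
  using H unfolding mon_subgroup_def by blast

lemma graph_functor: "monoid_hom_on T G H \<phi> \<Longrightarrow> cat_functor (C.graph_fix H \<phi>) (D.graph_fix H \<phi>) f"
  using graph_equivalence unfolding cat_equivalence_def cat_functor_def by blast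

lemma quot_ftr_QH_full: "full (C.QH H) (D.QH H) qf"
  unfolding full_def
proof (intro ballI impI)
  fix X Y S' assume X: "X \<in> Ob (C.QH H)" and Y: "Y \<in> Ob (C.QH H)" and S': "S' \<in> Ar (D.QH H)"
    and S'_hom: "Dom (D.QH H) S' = FO qf X \<and> Cod (D.QH H) S' = FO qf Y"
  have "X \<in> Ob C.Q" using X by simp
  then obtain x where x: "x \<in> Ob C" "X = C.orbit x"
    using C.Ob_Q_nonempty C.Ob_Q_orbit by blast
  obtain \<phi> where \<phi>: "monoid_hom_on T G H \<phi>" and x_fix: "x \<in> Ob (C.graph_fix H \<phi>)"
    using C.graph_fix_if_orbit_in_QH[OF H x(1)] X x by blast
  interpret f\<phi>: cat_functor "C.graph_fix H \<phi>" "D.graph_fix H \<phi>" f by (rule graph_functor[OF \<phi>])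
  have "FO f x \<in> Dom D ` S'"
    using S'_hom x D.orbit_self[of "FO f x"] by (simp add: D.quot_cat_simps)
  then obtain b where b: "b \<in> S'" "Dom D b = FO f x" by auto
  have b_orbit: "b \<in> Ar D" "S' = D.orbit_Ar b" using D.Ar_Q_orbit S' b(1) by auto
  have b_fix: "b \<in> Ar (D.graph_fix H \<phi>)"
    using D.graph_fix_if_Dom_graph_fix[OF H_in_Ob monoid_hom_on_funcset[OF \<phi>] b_orbit(1)] S' b_orbit(2) b(2)
      f\<phi>.FO_in_Ob[OF x_fix] by metis
  have "Cod D b \<in> FO f ` Y"
    using S'_hom b(1) by (auto simp: D.quot_cat_simps quot_ftr_def)
  then obtain y where y: "y \<in> Y" "Cod D b = FO f y" by auto
  have y_orbit: "y \<in> Ob C" "Y = C.orbit y" using C.Ob_Q_orbit Y y(1) by auto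
  have y_fix: "y \<in> Ob (C.graph_fix H \<phi>)"
    using graph_fix_if_image_graph_fix[OF H_in_Ob monoid_hom_on_funcset[OF \<phi>] y_orbit(1)] Y y_orbit(2) y(2)
      f\<phi>.D.Cod_in_Ob[OF b_fix] by (metis fix_cat_simps(4))
  have "full (C.graph_fix H \<phi>) (D.graph_fix H \<phi>) f"
    using graph_equivalence[OF \<phi>] cat_equivalence_iff by blast
  then obtain a where a: "a \<in> Ar (C.graph_fix H \<phi>)" "Dom C a = x" "Cod C a = y" "FA f a = b"
    using x_fix y_fix b_fix b(2) y(2) unfolding full_def fix_cat_simps(3,4) by blast
  show "\<exists>R\<in>Ar (C.QH H). Dom (C.QH H) R = X \<and> Cod (C.QH H) R = Y \<and> FA qf R = S'"
  proof (intro bexI conjI)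
    show "C.orbit_Ar a \<in> Ar (C.QH H)"
      by (rule C.orbit_Ar_in_QH_if_graph_fix[OF H_in_Ob monoid_hom_on_funcset[OF \<phi>] a(1)])
    show "Dom (C.QH H) (C.orbit_Ar a) = X" "Cod (C.QH H) (C.orbit_Ar a) = Y" "FA qf (C.orbit_Ar a) = S'"
      using a x y_orbit b_orbit by simp_all
  qed
qed

lemma quot_ftr_QH_faithful: "faithful (C.QH H) (D.QH H) qf"
  unfolding faithful_def
proof (intro ballI impI)
  fix S1 S2 assume S1: "S1 \<in> Ar (C.QH H)" and S2: "S2 \<in> Ar (C.QH H)"
    and parallel: "Dom (C.QH H) S1 = Dom (C.QH H) S2 \<and> Cod (C.QH H) S1 = Cod (C.QH H) S2 \<and> FA qf S1 = FA qf S2"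
  have "S1 \<in> Ar C.Q" using S1 by simp
  then obtain a1 where a1: "a1 \<in> Ar C" "S1 = C.orbit_Ar a1"
    using C.Ar_Q_nonempty C.Ar_Q_orbit by blast
  define x where "x = Dom C a1"
  have x: "x \<in> Ob C" unfolding x_def using a1 by simp
  have "C.orbit x \<in> Ob (C.QH H)"
    using category.Dom_in_Ob[OF category.intro[OF fix_cat_is_cat[OF C.T.D.is_cat C.quot_action_functor H_in_Ob]] S1]
    a1 x_def by simp
  then obtain \<phi> where \<phi>: "monoid_hom_on T G H \<phi>" and x_fix: "x \<in> Ob (C.graph_fix H \<phi>)"
    using C.graph_fix_if_orbit_in_QH[OF H x] by blast
  have "Dom C.Q S2 = C.orbit x"
    using parallel a1 x_def by simp
  then have "x \<in> Dom C ` S2"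
    using C.orbit_self[OF x] by (simp add: C.quot_cat_simps)
  then obtain a2 where a2: "a2 \<in> S2" "Dom C a2 = x" by auto
  have a2_orbit: "a2 \<in> Ar C" "S2 = C.orbit_Ar a2" using C.Ar_Q_orbit S2 a2(1) by auto
  have a1_fix: "a1 \<in> Ar (C.graph_fix H \<phi>)"
    using C.graph_fix_if_Dom_graph_fix[OF H_in_Ob monoid_hom_on_funcset[OF \<phi>] a1(1)] S1 a1(2) x_fix x_def by metis
  have a2_fix: "a2 \<in> Ar (C.graph_fix H \<phi>)"
    using C.graph_fix_if_Dom_graph_fix[OF H_in_Ob monoid_hom_on_funcset[OF \<phi>] a2_orbit(1)] S2 a2_orbit(2) a2(2) x_fix by metis
  have "FA f a2 = FA f a1 \<and> Cod C a2 = Cod C a1"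
    using parallel a1 a2_orbit a2(2) x_def D.orbit_Ar_eq_iff C.orbit_eq_iff
    by (intro representatives_agree) simp_all
  then have "a1 = a2"
    using graph_equivalence[OF \<phi>] a1_fix a2_fix a2(2) x_def
    unfolding cat_equivalence_iff faithful_def by simp
  then show "S1 = S2" using a1 a2_orbit by simp
qed

lemma quot_ftr_QH_ess_surj: "ess_surj (C.QH H) (D.QH H) qf"
  unfolding ess_surj_def
proof
  fix Y assume Y: "Y \<in> Ob (D.QH H)"
  have "Y \<in> Ob D.Q" using Y by simp
  then obtain y where y: "y \<in> Ob D" "Y = D.orbit y"
    using D.Ob_Q_nonempty D.Ob_Q_orbit by blast
  obtain \<phi> where \<phi>: "monoid_hom_on T G H \<phi>" and y_fix: "y \<in> Ob (D.graph_fix H \<phi>)"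
    using D.graph_fix_if_orbit_in_QH[OF H y(1)] Y y by blast
  have "ess_surj (C.graph_fix H \<phi>) (D.graph_fix H \<phi>) f"
    using graph_equivalence[OF \<phi>] cat_equivalence_iff by blast
  then obtain x b where x_fix: "x \<in> Ob (C.graph_fix H \<phi>)" and b: "cat_iso (D.graph_fix H \<phi>) b"
    "Dom D b = FO f x" "Cod D b = y"
    using y_fix unfolding ess_surj_def fix_cat_simps(3,4) by blast
  obtain b' where b_fix: "b \<in> Ar (D.graph_fix H \<phi>)" and b'_fix: "b' \<in> Ar (D.graph_fix H \<phi>)"
    and b': "Dom D b' = Cod D b" "Cod D b' = Dom D b" "Cmp D b' b = Idt D (Dom D b)" "Cmp D b b' = Idt D (Cod D b)"
    using b(1) unfolding cat_iso_def fix_cat_simps(3-6) by blast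
  have bD: "b \<in> Ar D" "b' \<in> Ar D" using b_fix b'_fix by simp_all
  have x: "x \<in> Ob C" using x_fix by simp
  note in_QH = D.orbit_Ar_in_QH_if_graph_fix[OF H_in_Ob monoid_hom_on_funcset[OF \<phi>]]
  have "cat_iso (D.QH H) (D.orbit_Ar b)"
    unfolding cat_iso_def using in_QH[OF b_fix] in_QH[OF b'_fix] bD b' by (intro conjI bexI[of _ "D.orbit_Ar b'"]) simp_all
  moreover have "Dom (D.QH H) (D.orbit_Ar b) = FO qf (C.orbit x)" "Cod (D.QH H) (D.orbit_Ar b) = Y"
    using bD b x y by simp_all
  moreover have "C.orbit x \<in> Ob (C.QH H)"
    by (rule C.orbit_in_QH_if_graph_fix[OF H_in_Ob monoid_hom_on_funcset[OF \<phi>] x_fix])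
  ultimately show "\<exists>X\<in>Ob (C.QH H). \<exists>S. cat_iso (D.QH H) S \<and> Dom (D.QH H) S = FO qf X \<and> Cod (D.QH H) S = Y"
    by blast
qed

lemma quot_ftr_QH_equivalence: "cat_equivalence (C.QH H) (D.QH H) qf"
  unfolding cat_equivalence_iff
  using quot_ftr_QH_functor[OF H_in_Ob] quot_ftr_QH_full quot_ftr_QH_faithful quot_ftr_QH_ess_surj by blast

end

end

theorem mainTheorem8:
  fixes M :: "('mo,'ma) cat"
    and T :: "('mo \<times> 'mo, 'ma \<times> 'ma, 'mo, 'ma) ftr"
    and u :: 'mo
    and Fam :: "'mo set set"
    and G :: "'g monoid"
    and C :: "('c,'ca) cat" and D :: "('d,'da) cat"
    and A :: "(('mo \<times> 'g) \<times> 'c, ('ma \<times> 'g) \<times> 'ca, 'c, 'ca) ftr"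
    and B :: "(('mo \<times> 'g) \<times> 'd, ('ma \<times> 'g) \<times> 'da, 'd, 'da) ftr"
    and f :: "('c,'ca,'d,'da) ftr"
  assumes "strict_monoidal M T u"
    and "fin_family M T u Fam"
    and "group G"
    and "strict_action (prod_cat M (disc_cat G)) (prod_tensor T (disc_tensor G)) (u, \<one>\<^bsub>G\<^esub>) C A"
    and "strict_action (prod_cat M (disc_cat G)) (prod_tensor T (disc_tensor G)) (u, \<one>\<^bsub>G\<^esub>) D B"
    and "is_functor C D f"
    and "equivariant (prod_cat M (disc_cat G)) C D A B f"
    and "fam_equiv (prod_cat M (disc_cat G)) C D A B (graph_subgroups T Fam G) f"
    and "free_G_action u G C A"
    and "free_G_action u G D B"
  shows "is_functor (quot_cat M u G C A) (quot_cat M u G D B) (quot_ftr f) \<and>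
         equivariant M (quot_cat M u G C A) (quot_cat M u G D B)
           (quot_action G A) (quot_action G B) (quot_ftr f) \<and>
         fam_equiv M (quot_cat M u G C A) (quot_cat M u G D B)
           (quot_action G A) (quot_action G B) Fam (quot_ftr f)"
proof -
  interpret free_MG_functor M T u G C A D B f
    using assms unfolding free_MG_functor_def free_MG_functor_axioms_def free_MG_cat_def by blast
  have "cat_equivalence (C.QH H) (D.QH H) qf" if H: "H \<in> Fam" for H
  proof (rule quot_ftr_QH_equivalence)
    show "mon_subgroup M T u H"
      using assms(2) H unfolding fin_family_def by blast
    show "cat_equivalence (C.graph_fix H \<phi>) (D.graph_fix H \<phi>) f" if "monoid_hom_on T G H \<phi>" for \<phi>
      using assms(8) graph_in_graph_subgroups[OF H that] unfolding fam_equiv_def by blast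
  qed
  then show ?thesis
    using quot_ftr_functor quot_ftr_equivariant unfolding fam_equiv_def by blast
qed

end
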